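(* In the setting described in the context (with $\theta\in\operatorname{Irr}(Z)$ faithful), for $\{i,j\}=\{1,2\}$ and every $a\in A_i=k[D_i\rtimes P_i]$, $$\iota_i(a)=\sum_{g\in L_i}\big(a\,e_{1_{L_j}}\,e_\theta\big)^g,$$ where $e_{1_{L_j}}\in kL_j$ is the central primitive idempotent of the trivial character of $L_j$ and $x^g=g^{-1}xg$.
   Context: Let $\ell$ be a prime and $k$ an algebraically closed field of characteristic $\ell$. Let $p\neq\ell$ be a prime and $L=\langle g_0\rangle\le\mathbb F_p^\times$ a subgroup of order $r>1$ with $\ell\nmid r$. For $i\in\{1,2\}$ let $P_i=(\mathbb F_p,+)$ and $D_i=\big(\prod_{x\in P_i}C_\ell\big)/\{(c,\dots,c):c\in C_\ell\}$; fixing a generator $d$ of $C_\ell$, $d_i^x\in D_i$ is the image of the tuple with $d$ in position $x$ and $1$ elsewhere; $P_i$ acts on $D_i$ by $(d_i^x)^y=d_i^{x+y}$, and $A_i=k[D_i\rtimes P_i]$. Let $H=\langle g_1,g_2,g_z\mid g_1^r=g_2^r=g_z^r=1,[g_1,g_z]=[g_2,g_z]=1,[g_1,g_2]=g_z\rangle$ with $[g,h]=ghg^{-1}h^{-1}$; $L_1=\langle g_1\rangle$, $L_2=\langle g_2\rangle$, $Z=\langle g_z\rangle$. $H$ acts on $N=(D_1\rtimes P_1)\times(D_2\rtimes P_2)$ with kernel $Z$: for $\{i,j\}=\{1,2\}$, $g_i$ acts trivially on $D_j\rtimes P_j$ and by $(d_i^xy)^{g_i}=d_i^{g_0x}(g_0y)$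 on $D_i\rtimes P_i$. $G=N\rtimes H$, with $x^g=g^{-1}xg$. Characters of $\ell'$-groups are over $k$; $e_\theta\in kZ$ is the central primitive idempotent of the faithful character $\theta\in\operatorname{Irr}(Z)$. For $\{i,j\}=\{1,2\}$ and $\chi\in\operatorname{Irr}(L_i)$, $h_{\chi,i}$ is the unique element of $L_j$ with $\chi(g)=\theta([h_{\chi,i},g])$ for all $g\in L_i$. Viewing $A_i\subseteq kG$, $A_i=\bigoplus_{\chi\in\operatorname{Irr}(L_i)}A_i^\chi$ with $A_i^\chi=\{a\in A_i:a^g=\chi(g)a\ \forall g\in L_i\}$, and $\iota_i:A_i\to kG$ is the linear map with $\iota_i(a)=a\,h_{\chi,i}^{-1}e_\theta$ for $a\in A_i^\chi$. *)

theory Defs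
  imports "HOL-Algebra.Group" "HOL-Number_Theory.Number_Theory"
          "HOL-Computational_Algebra.Polynomial"
begin

text \<open>Parameters: p (the prime with P_i = F_p), l (the characteristic ell),
  r (order of L), g0 (generator of L inside F_p^*).  Residues mod p are
  represented by integers in [0,p); C_ell additively by integers in [0,ell).\<close>

type_synonym delem = "int \<Rightarrow> int"
type_synonym dpelem = "delem \<times> int"         \<comment> \<open>element d y of D_i \<rtimes> P_i\<close>
type_synonym helem = "int \<times> int \<times> int"     \<comment> \<open>(a,b,c) = g1^a g2^b gz^c\<close>
type_synonym gelem = "(dpelem \<times> dpelem) \<times> helem" \<comment> \<open>(n,h) = n h\<close>

text \<open>D = (C_ell)^{F_p} / diagonal: a function F_p -> Z/ell, normalised to
  vanish at position 0 (and outside [0,p)).\<close>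
definition Dnorm :: "nat \<Rightarrow> nat \<Rightarrow> (int \<Rightarrow> int) \<Rightarrow> delem" where
  "Dnorm p l f = (\<lambda>x. if 0 \<le> x \<and> x < int p then (f x - f 0) mod int l else 0)"

definition Dset :: "nat \<Rightarrow> nat \<Rightarrow> delem set" where
  "Dset p l = {f. \<exists>g. f = Dnorm p l g}"

definition Dmul :: "nat \<Rightarrow> nat \<Rightarrow> delem \<Rightarrow> delem \<Rightarrow> delem" where
  "Dmul p l f f' = Dnorm p l (\<lambda>x. f x + f' x)"

text \<open>shift y: (d^x)^y = d^{x+y}\<close>
definition Dshift :: "nat \<Rightarrow> nat \<Rightarrow> int \<Rightarrow> delem \<Rightarrow> delem" where
  "Dshift p l y f = Dnorm p l (\<lambda>x. f ((x - y) mod int p))"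

text \<open>the automorphism d^x |-> d^{s x} where c is the inverse of s mod p\<close>
definition Dmulpos :: "nat \<Rightarrow> nat \<Rightarrow> int \<Rightarrow> delem \<Rightarrow> delem" where
  "Dmulpos p l c f = Dnorm p l (\<lambda>z. f ((c * z) mod int p))"

definition DPset :: "nat \<Rightarrow> nat \<Rightarrow> dpelem set" where
  "DPset p l = Dset p l \<times> {0..<int p}"

definition DPone :: dpelem where
  "DPone = ((\<lambda>_. 0), 0)"

text \<open>(d y)(d' y') = d (y d' y^{-1}) (y+y'), with y d' y^{-1} = d'^{-y}\<close>
definition DPmul :: "nat \<Rightarrow> nat \<Rightarrow> dpelem \<Rightarrow> dpelem \<Rightarrow> dpelem" where
  "DPmul p l u v = (Dmul p l (fst u) (Dshift p l (- snd u) (fst v)), (snd u + snd v) mod int p)"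

text \<open>psi^e where psi(d^x y) = d^{g0 x} (g0 y) is the action of g_i on
  D_i \<rtimes> P_i; g0^{-e} = g0^{(r-1) e} mod p.\<close>
definition psi :: "nat \<Rightarrow> nat \<Rightarrow> nat \<Rightarrow> nat \<Rightarrow> nat \<Rightarrow> dpelem \<Rightarrow> dpelem" where
  "psi p l r g0 e u =
     (Dmulpos p l ((int g0 ^ ((r - 1) * e)) mod int p) (fst u), (int g0 ^ e * snd u) mod int p)"

definition Hset :: "nat \<Rightarrow> helem set" where
  "Hset r = {0..<int r} \<times> {0..<int r} \<times> {0..<int r}"

text \<open>g2^b g1^a' = g1^a' g2^b gz^{-a'b}, since [g1,g2] = g1 g2 g1^-1 g2^-1 = gz is central\<close>
definition Hmul :: "nat \<Rightarrow> helem \<Rightarrow> helem \<Rightarrow> helem" where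
  "Hmul r h h' = (case h of (a,b,c) \<Rightarrow> case h' of (a',b',c') \<Rightarrow>
      ((a + a') mod int r, (b + b') mod int r, (c + c' - a' * b) mod int r))"

definition Gset :: "nat \<Rightarrow> nat \<Rightarrow> nat \<Rightarrow> gelem set" where
  "Gset p l r = (DPset p l \<times> DPset p l) \<times> Hset r"

text \<open>(n h)(n' h') = n (h n' h^{-1}) h h', where h n' h^{-1} = n'^{h^{-1}} and
  g1^a g2^b gz^c acts (on the right) on N by (psi^a, psi^b)\<close>
definition Gmul :: "nat \<Rightarrow> nat \<Rightarrow> nat \<Rightarrow> nat \<Rightarrow> gelem \<Rightarrow> gelem \<Rightarrow> gelem" where
  "Gmul p l r g0 x y =
     (case x of ((n1, n2), (a, b, c)) \<Rightarrow> case y of ((n1', n2'), h') \<Rightarrow>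
       ((DPmul p l n1 (psi p l r g0 ((r - 1) * nat a) n1'),
         DPmul p l n2 (psi p l r g0 ((r - 1) * nat b) n2')),
        Hmul r (a, b, c) h'))"

definition Gone :: gelem where
  "Gone = ((DPone, DPone), (0, 0, 0))"

definition Grp :: "nat \<Rightarrow> nat \<Rightarrow> nat \<Rightarrow> nat \<Rightarrow> gelem monoid" where
  "Grp p l r g0 = \<lparr>carrier = Gset p l r, mult = Gmul p l r g0, one = Gone\<rparr>"

definition embDP :: "nat \<Rightarrow> dpelem \<Rightarrow> gelem" where
  "embDP i u = (if i = 1 then ((u, DPone), (0,0,0)) else ((DPone, u), (0,0,0)))"

definition Lsub :: "nat \<Rightarrow> nat \<Rightarrow> gelem set" where
  "Lsub r i = (\<lambda>t. ((DPone, DPone), if i = 1 then (t, 0, 0) else (0, t, 0))) ` {0..<int r}"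

definition Zsub :: "nat \<Rightarrow> gelem set" where
  "Zsub r = (\<lambda>t. ((DPone, DPone), (0, 0, t))) ` {0..<int r}"

section \<open>The group algebra kG (elements: functions G -> k supported on G)\<close>

type_synonym 'k galg = "gelem \<Rightarrow> 'k"

definition supported_in :: "gelem set \<Rightarrow> 'k::zero galg \<Rightarrow> bool" where
  "supported_in S u \<longleftrightarrow> (\<forall>x. u x \<noteq> 0 \<longrightarrow> x \<in> S)"

definition conv :: "gelem monoid \<Rightarrow> 'k::comm_ring_1 galg \<Rightarrow> 'k galg \<Rightarrow> 'k galg" where
  "conv G u v = (\<lambda>x. \<Sum>g\<in>carrier G. \<Sum>h\<in>carrier G.
                    if g \<otimes>\<^bsub>G\<^esub> h = x then u g * v h else 0)"

definition delta :: "gelem \<Rightarrow> 'k::zero_neq_one galg" where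
  "delta g = (\<lambda>x. if x = g then 1 else 0)"

definition conjg :: "gelem monoid \<Rightarrow> 'k::comm_ring_1 galg \<Rightarrow> gelem \<Rightarrow> 'k galg" where
  "conjg G u g = conv G (conv G (delta (inv\<^bsub>G\<^esub> g)) u) (delta g)"

definition commut :: "gelem monoid \<Rightarrow> gelem \<Rightarrow> gelem \<Rightarrow> gelem" where
  "commut G g h = g \<otimes>\<^bsub>G\<^esub> h \<otimes>\<^bsub>G\<^esub> inv\<^bsub>G\<^esub> g \<otimes>\<^bsub>G\<^esub> inv\<^bsub>G\<^esub> h"

text \<open>A_i = k[D_i \<rtimes> P_i] viewed inside kG\<close>
definition Aalg :: "nat \<Rightarrow> nat \<Rightarrow> nat \<Rightarrow> 'k::zero galg set" where
  "Aalg p l i = {u. supported_in (embDP i ` DPset p l) u}"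

text \<open>Irreducible characters (over k) of the cyclic l'-group L_i: group
  homomorphisms L_i -> k^*, extended by 0 outside L_i.\<close>
definition Irr :: "gelem monoid \<Rightarrow> gelem set \<Rightarrow> (gelem \<Rightarrow> 'k::field) set" where
  "Irr G S = {\<chi>. (\<forall>x\<in>S. \<forall>y\<in>S. \<chi> (x \<otimes>\<^bsub>G\<^esub> y) = \<chi> x * \<chi> y)
              \<and> (\<forall>x\<in>S. \<chi> x \<noteq> 0) \<and> (\<forall>x. x \<notin> S \<longrightarrow> \<chi> x = 0)}"

definition cpi :: "gelem monoid \<Rightarrow> gelem set \<Rightarrow> (gelem \<Rightarrow> 'k::field) \<Rightarrow> 'k galg" where
  "cpi G S \<chi> = (\<lambda>x. (1 / of_nat (card S)) * (\<Sum>s\<in>S. \<chi> (inv\<^bsub>G\<^esub> s) * delta s x))"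

definition Achi :: "nat \<Rightarrow> nat \<Rightarrow> nat \<Rightarrow> nat \<Rightarrow> nat \<Rightarrow> (gelem \<Rightarrow> 'k::field) \<Rightarrow> 'k galg set" where
  "Achi p l r g0 i \<chi> = {a \<in> Aalg p l i.
      \<forall>g\<in>Lsub r i. conjg (Grp p l r g0) a g = (\<lambda>x. \<chi> g * a x)}"

definition hchi :: "nat \<Rightarrow> nat \<Rightarrow> nat \<Rightarrow> nat \<Rightarrow> (gelem \<Rightarrow> 'k::field) \<Rightarrow> nat \<Rightarrow> (gelem \<Rightarrow> 'k) \<Rightarrow> gelem" where
  "hchi p l r g0 \<theta> i \<chi> = (THE h. h \<in> Lsub r (3 - i) \<and>
      (\<forall>g\<in>Lsub r i. \<chi> g = \<theta> (commut (Grp p l r g0) h g)))"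

text \<open>iota_i: the k-linear map A_i -> kG with iota_i(a) = a h_{chi,i}^{-1} e_theta
  for a in A_i^chi (made unique by requiring value 0 outside A_i)\<close>
definition iota :: "nat \<Rightarrow> nat \<Rightarrow> nat \<Rightarrow> nat \<Rightarrow> (gelem \<Rightarrow> 'k::field) \<Rightarrow> nat \<Rightarrow> 'k galg \<Rightarrow> 'k galg" where
  "iota p l r g0 \<theta> i = (THE f.
      (\<forall>a\<in>Aalg p l i. \<forall>b\<in>Aalg p l i. f (\<lambda>x. a x + b x) = (\<lambda>x. f a x + f b x))
    \<and> (\<forall>c. \<forall>a\<in>Aalg p l i. f (\<lambda>x. c * a x) = (\<lambda>x. c * f a x))
    \<and> (\<forall>\<chi>\<in>Irr (Grp p l r g0) (Lsub r i). \<forall>a\<in>Achi p l r g0 i \<chi>.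
         f a = conv (Grp p l r g0)
                 (conv (Grp p l r g0) a (delta (inv\<^bsub>Grp p l r g0\<^esub> (hchi p l r g0 \<theta> i \<chi>))))
                 (cpi (Grp p l r g0) (Zsub r) \<theta>))
    \<and> (\<forall>a. a \<notin> Aalg p l i \<longrightarrow> f a = (\<lambda>_. 0)))"

end

theory Submission
  imports Defs
begin

text \<open>
  Let a lie in the \<chi>-eigenspace A_i^\<chi>. Conjugation by g \<in> L_i multiplies a by \<chi>(g), fixes e_\<theta>
  because Z is central, and sends \<mu> \<in> L_j to \<mu> [\<mu>^{-1}, g^{-1}] with the commutator in Z, which
  e_\<theta> absorbs as the scalar \<theta>([\<mu>^{-1}, g^{-1}]). Hence the sum of the conjugates
  (a e_{1_{L_j}} e_\<theta>)^g over g \<in> L_i is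
  (1/r) \<Sum>_\<mu> (\<Sum>_g \<chi>(g) \<theta>([\<mu>^{-1}, g^{-1}])) a \<mu> e_\<theta>.
  As \<theta> is faithful, \<theta>(g_z) is a primitive r-th root of unity, so every character of the cyclic
  group L_i is \<theta>([h, -]) for a unique h \<in> L_j, and orthogonality of characters leaves only the
  term \<mu> = h_{\<chi>,i}^{-1}. Finally, A_i is the sum of its isotypic components A_i^\<chi>, so the
  linear map \<iota>_i is determined by these values and agrees with the right-hand side.
\<close>

lemma mod_add_diff_left_eq: "((a::int) mod n + b - c) mod n = (a + b - c) mod n"
  by (intro mod_diff_cong mod_add_cong) simp_all

lemma mod_add_right_diff_eq: "((a::int) + b mod n - (c + d mod n)) mod n = (a + b - (c + d)) mod n"
  by (intro mod_diff_cong mod_add_cong) simp_all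

lemma mod_add_diff_mult_right_eq: "((a::int) mod n + b - c * (d mod n)) mod n = (a + b - c * d) mod n"
  by (intro mod_diff_cong mod_add_cong mod_mult_cong) simp_all

lemma mod_add_diff_mult_left_eq: "((a::int) + b mod n - (c mod n) * d) mod n = (a + b - c * d) mod n"
  by (intro mod_diff_cong mod_add_cong mod_mult_cong) simp_all

lemma mod_minus_mult_left_eq: "(- ((a::int) mod n * b)) mod n = (- (a * b)) mod n"
  by (intro mod_minus_cong mod_mult_cong) simp_all

lemma mod_minus_mult_right_eq: "(- ((a::int) * (b mod n))) mod n = (- (a * b)) mod n"
  by (intro mod_minus_cong mod_mult_cong) simp_all

section \<open>The groups D \<rtimes> P and the automorphism \<psi>\<close>

locale Grp_data =
  fixes p l r g0 :: nat
  assumes p_gt1: "p > 1" and l_gt1: "l > 1" and r_gt1: "r > 1"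
    and g0_pow_r: "int g0 ^ r mod int p = 1"
begin

lemma Dnorm_add_left: "Dnorm p l (\<lambda>x. Dnorm p l f x + g x) = Dnorm p l (\<lambda>x. f x + g x)"
proof
  fix x
  have "((f x - f 0) mod int l + g x - (0 + g 0)) mod int l = (f x + g x - (f 0 + g 0)) mod int l"
    unfolding mod_add_diff_left_eq by (simp add: algebra_simps)
  with p_gt1 show "Dnorm p l (\<lambda>x. Dnorm p l f x + g x) x = Dnorm p l (\<lambda>x. f x + g x) x"
    by (simp add: Dnorm_def)
qed

lemma Dnorm_add_right: "Dnorm p l (\<lambda>x. g x + Dnorm p l f x) = Dnorm p l (\<lambda>x. g x + f x)"
  using Dnorm_add_left[of f g] by (simp add: add.commute)

lemma Dnorm_reindex: "Dnorm p l (\<lambda>x. Dnorm p l f (k x mod int p)) = Dnorm p l (\<lambda>x. f (k x mod int p))"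
proof
  fix x
  have "((f a - f 0) mod int l - (f b - f 0) mod int l) mod int l = (f a - f b) mod int l" for a b
    unfolding mod_diff_eq by (simp add: algebra_simps)
  with p_gt1 show "Dnorm p l (\<lambda>x. Dnorm p l f (k x mod int p)) x = Dnorm p l (\<lambda>x. f (k x mod int p)) x"
    by (simp add: Dnorm_def)
qed

lemma Dnorm_add_right_reindex:
  "Dnorm p l (\<lambda>x. g x + Dnorm p l f (k x mod int p)) = Dnorm p l (\<lambda>x. g x + f (k x mod int p))"
proof
  fix x
  have "(g x + (f a - f 0) mod int l - (g 0 + (f b - f 0) mod int l)) mod int l
      = (g x + f a - (g 0 + f b)) mod int l" for a b
    unfolding mod_add_right_diff_eq by (simp add: algebra_simps)
  with p_gt1 show "Dnorm p l (\<lambda>x. g x + Dnorm p l f (k x mod int p)) x = Dnorm p l (\<lambda>x. g x + f (k x mod int p)) x"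
    by (simp add: Dnorm_def)
qed

lemma Dnorm_zero: "Dnorm p l (\<lambda>_. 0) = (\<lambda>_. 0)"
  unfolding Dnorm_def by auto

lemma Dnorm_in_Dset: "Dnorm p l f \<in> Dset p l"
  unfolding Dset_def by auto

lemma Dnorm_eq_self: "f \<in> Dset p l \<Longrightarrow> Dnorm p l f = f"
  using Dnorm_add_left[of _ "\<lambda>_. 0"] unfolding Dset_def by auto

lemma zero_in_Dset: "(\<lambda>_. 0) \<in> Dset p l"
  using Dnorm_in_Dset[of "\<lambda>_. 0"] by (simp add: Dnorm_zero)

lemma finite_Dset: "finite (Dset p l)"
proof (rule finite_subset)
  show "Dset p l \<subseteq> (\<lambda>g x. if 0 \<le> x \<and> x < int p then g x else 0) ` ({0..<int p} \<rightarrow>\<^sub>E {0..<int l})"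
  proof
    fix f assume "f \<in> Dset p l"
    then obtain g where f: "f = Dnorm p l g" unfolding Dset_def by auto
    let ?h = "restrict (\<lambda>x. (g x - g 0) mod int l) {0..<int p}"
    have "?h \<in> {0..<int p} \<rightarrow>\<^sub>E {0..<int l}" using l_gt1 by auto
    moreover have "f = (\<lambda>x. if 0 \<le> x \<and> x < int p then ?h x else 0)" unfolding f Dnorm_def by auto
    ultimately show "f \<in> (\<lambda>g x. if 0 \<le> x \<and> x < int p then g x else 0) ` ({0..<int p} \<rightarrow>\<^sub>E {0..<int l})"
      by blast
  qed
qed (auto intro!: finite_PiE)

lemma Dmul_in_Dset: "Dmul p l f g \<in> Dset p l"
  unfolding Dmul_def by (rule Dnorm_in_Dset)

lemma Dshift_in_Dset: "Dshift p l y f \<in> Dset p l"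
  unfolding Dshift_def by (rule Dnorm_in_Dset)

lemma Dmulpos_in_Dset: "Dmulpos p l c f \<in> Dset p l"
  unfolding Dmulpos_def by (rule Dnorm_in_Dset)

lemma Dmul_assoc: "Dmul p l (Dmul p l f g) h = Dmul p l f (Dmul p l g h)"
  unfolding Dmul_def by (simp add: Dnorm_add_left Dnorm_add_right add.assoc)

lemma Dmul_zero_left: "f \<in> Dset p l \<Longrightarrow> Dmul p l (\<lambda>_. 0) f = f"
  unfolding Dmul_def by (simp add: Dnorm_eq_self)

lemma Dmul_zero_right: "f \<in> Dset p l \<Longrightarrow> Dmul p l f (\<lambda>_. 0) = f"
  unfolding Dmul_def by (simp add: Dnorm_eq_self)

lemma Dshift_Dmul: "Dshift p l y (Dmul p l f g) = Dmul p l (Dshift p l y f) (Dshift p l y g)"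
  unfolding Dmul_def Dshift_def by (simp add: Dnorm_add_left Dnorm_add_right Dnorm_reindex)

lemma Dshift_Dshift: "Dshift p l y (Dshift p l y' f) = Dshift p l (y + y') f"
  unfolding Dshift_def by (simp add: Dnorm_reindex mod_simps algebra_simps)

lemma Dshift_cong:
  assumes "y mod int p = y' mod int p"
  shows "Dshift p l y f = Dshift p l y' f"
proof -
  have "(x - y) mod int p = (x - y') mod int p" for x
    by (intro mod_diff_cong refl assms)
  then show ?thesis unfolding Dshift_def by simp
qed

lemma Dshift_zero: "Dshift p l y (\<lambda>_. 0) = (\<lambda>_. 0)"
  unfolding Dshift_def by (simp add: Dnorm_zero)

lemma Dshift_0: "f \<in> Dset p l \<Longrightarrow> Dshift p l 0 f = f"
proof -
  assume f: "f \<in> Dset p l"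
  have "Dshift p l 0 f = Dnorm p l f"
    unfolding Dshift_def Dnorm_def by (auto simp: fun_eq_iff)
  with f show ?thesis by (simp add: Dnorm_eq_self)
qed

lemma Dmulpos_cong:
  assumes "c mod int p = c' mod int p"
  shows "Dmulpos p l c f = Dmulpos p l c' f"
proof -
  have "(c * z) mod int p = (c' * z) mod int p" for z
    by (intro mod_mult_cong refl assms)
  then show ?thesis unfolding Dmulpos_def by simp
qed

lemma Dmulpos_Dmulpos: "Dmulpos p l c (Dmulpos p l c' f) = Dmulpos p l (c' * c) f"
  unfolding Dmulpos_def
  using Dnorm_reindex[of "\<lambda>w. f ((c' * w) mod int p)" "\<lambda>z. c * z"]
  by (simp add: mod_mult_right_eq mult.assoc)

lemma Dmulpos_1: "f \<in> Dset p l \<Longrightarrow> Dmulpos p l 1 f = f"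
proof -
  assume f: "f \<in> Dset p l"
  have "Dmulpos p l 1 f = Dnorm p l f"
    unfolding Dmulpos_def Dnorm_def by (auto simp: fun_eq_iff)
  with f show ?thesis by (simp add: Dnorm_eq_self)
qed

lemma Dmulpos_zero: "Dmulpos p l c (\<lambda>_. 0) = (\<lambda>_. 0)"
  unfolding Dmulpos_def by (simp add: Dnorm_zero)

lemma DPmul_in_DPset: "DPmul p l u v \<in> DPset p l"
  using p_gt1 unfolding DPmul_def DPset_def by (auto simp: Dmul_in_Dset)

lemma DPone_in_DPset: "DPone \<in> DPset p l"
  using p_gt1 unfolding DPone_def DPset_def by (auto simp: zero_in_Dset)

lemma DPmul_assoc: "DPmul p l (DPmul p l u v) w = DPmul p l u (DPmul p l v w)"
proof -
  have "Dshift p l (- ((snd u + snd v) mod int p)) (fst w) = Dshift p l (- snd u + - snd v) (fst w)"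
    by (rule Dshift_cong) (simp add: mod_simps)
  then show ?thesis unfolding DPmul_def
    by (simp add: Dmul_assoc Dshift_Dmul Dshift_Dshift add.assoc mod_add_left_eq mod_add_right_eq)
qed

lemma DPmul_DPone_left: "u \<in> DPset p l \<Longrightarrow> DPmul p l DPone u = u"
  unfolding DPmul_def DPone_def DPset_def by (auto simp: Dshift_0 Dmul_zero_left)

lemma DPmul_DPone_right: "u \<in> DPset p l \<Longrightarrow> DPmul p l u DPone = u"
  unfolding DPmul_def DPone_def DPset_def by (auto simp: Dshift_zero Dmul_zero_right)

definition DPinv :: "dpelem \<Rightarrow> dpelem" where
  "DPinv u = (Dshift p l (snd u) (\<lambda>x. - fst u x), (- snd u) mod int p)"

lemma DPinv_in_DPset: "DPinv u \<in> DPset p l"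
  using p_gt1 unfolding DPinv_def DPset_def by (auto simp: Dshift_in_Dset)

lemma DPmul_DPinv_left: "DPmul p l (DPinv u) u = DPone"
proof -
  have "Dshift p l (- ((- snd u) mod int p)) (fst u) = Dshift p l (snd u) (fst u)"
    by (rule Dshift_cong) (simp add: mod_simps)
  moreover have "Dmul p l (\<lambda>x. - fst u x) (fst u) = (\<lambda>_. 0)"
    unfolding Dmul_def by (simp add: Dnorm_zero)
  ultimately show ?thesis unfolding DPmul_def DPinv_def DPone_def
    by (simp add: Dshift_Dmul[symmetric] Dshift_zero mod_add_left_eq)
qed

abbreviation \<psi> :: "nat \<Rightarrow> dpelem \<Rightarrow> dpelem" where
  "\<psi> \<equiv> psi p l r g0"

lemma g0_pow_mod_r: "int g0 ^ e mod int p = int g0 ^ (e mod r) mod int p"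
proof -
  have "int g0 ^ e = (int g0 ^ r) ^ (e div r) * int g0 ^ (e mod r)"
    by (simp only: power_mult[symmetric] power_add[symmetric] mult_div_mod_eq)
  then have "int g0 ^ e mod int p = (((int g0 ^ r) mod int p) ^ (e div r) mod int p) * int g0 ^ (e mod r) mod int p"
    by (metis mod_mult_left_eq power_mod)
  also have "\<dots> = int g0 ^ (e mod r) mod int p"
    using g0_pow_r p_gt1 by simp
  finally show ?thesis .
qed

lemma g0_pow_cong: "e mod r = e' mod r \<Longrightarrow> int g0 ^ e mod int p = int g0 ^ e' mod int p"
  using g0_pow_mod_r by metis

lemma g0_pow_inverse: "(int g0 ^ ((r - 1) * e) mod int p) * int g0 ^ e mod int p = 1"
proof -
  have "(int g0 ^ ((r - 1) * e) mod int p) * int g0 ^ e mod int p = int g0 ^ ((r - 1) * e + e) mod int p"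
    by (simp add: mod_mult_left_eq power_add)
  also have "\<dots> = int g0 ^ 0 mod int p"
    by (rule g0_pow_cong) (use r_gt1 in \<open>simp add: algebra_simps\<close>)
  finally show ?thesis using p_gt1 by simp
qed

lemma psi_in_DPset: "\<psi> e u \<in> DPset p l"
  using p_gt1 unfolding psi_def DPset_def by (auto simp: Dmulpos_in_Dset)

lemma psi_DPone: "\<psi> e DPone = DPone"
  unfolding psi_def DPone_def by (simp add: Dmulpos_zero)

lemma psi_0: "u \<in> DPset p l \<Longrightarrow> \<psi> 0 u = u"
proof -
  assume u: "u \<in> DPset p l"
  have "Dmulpos p l (1 mod int p) (fst u) = Dmulpos p l 1 (fst u)"
    by (rule Dmulpos_cong) simp
  with u p_gt1 show ?thesis unfolding psi_def DPset_def by (auto simp: Dmulpos_1)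
qed

lemma psi_psi: "\<psi> e (\<psi> e' u) = \<psi> (e + e') u"
proof -
  have "Dmulpos p l (int g0 ^ ((r - 1) * e') mod int p * (int g0 ^ ((r - 1) * e) mod int p)) f
      = Dmulpos p l (int g0 ^ ((r - 1) * (e + e')) mod int p) f" for f
  proof (rule Dmulpos_cong)
    have "(r - 1) * (e + e') = (r - 1) * e' + (r - 1) * e" by (simp add: add_mult_distrib2)
    then show "int g0 ^ ((r - 1) * e') mod int p * (int g0 ^ ((r - 1) * e) mod int p) mod int p =
      int g0 ^ ((r - 1) * (e + e')) mod int p mod int p" by (simp add: mod_mult_eq power_add)
  qed
  moreover have "int g0 ^ e * (int g0 ^ e' * snd u mod int p) mod int p = int g0 ^ (e + e') * snd u mod int p"
    by (simp add: mod_mult_right_eq power_add mult.assoc)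
  ultimately show ?thesis unfolding psi_def by (simp add: Dmulpos_Dmulpos)
qed

lemma psi_cong:
  assumes e: "e mod r = e' mod r"
  shows "\<psi> e u = \<psi> e' u"
proof -
  have "(r - 1) * e mod r = (r - 1) * e' mod r"
    by (intro mod_mult_cong refl e)
  then have "int g0 ^ ((r - 1) * e) mod int p = int g0 ^ ((r - 1) * e') mod int p"
    by (rule g0_pow_cong)
  then have "Dmulpos p l (int g0 ^ ((r - 1) * e) mod int p) f = Dmulpos p l (int g0 ^ ((r - 1) * e') mod int p) f" for f
    by (intro Dmulpos_cong) simp
  moreover have "int g0 ^ e * y mod int p = int g0 ^ e' * y mod int p" for y
    by (intro mod_mult_cong refl g0_pow_cong e)
  ultimately show ?thesis unfolding psi_def by simp
qed

lemma psi_DPmul: "\<psi> e (DPmul p l u v) = DPmul p l (\<psi> e u) (\<psi> e v)"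
proof -
  obtain f y where u: "u = (f, y)" by fastforce
  obtain f' y' where v: "v = (f', y')" by fastforce
  define c where "c = int g0 ^ ((r - 1) * e) mod int p"
  define s where "s = int g0 ^ e"
  have cs: "c * s mod int p = 1" unfolding c_def s_def by (rule g0_pow_inverse)
  have index: "(c * ((z + s * y mod int p) mod int p)) mod int p = ((c * z) mod int p + y) mod int p" for z
  proof -
    have "(c * ((z + s * y mod int p) mod int p)) mod int p = (c * z + (c * s) * y) mod int p"
      by (simp add: mod_mult_right_eq mod_add_right_eq algebra_simps)
    also have "\<dots> = (c * z + ((c * s) mod int p) * y) mod int p"
      by (intro mod_add_cong mod_mult_cong) simp_all
    finally show ?thesis using cs by (simp add: mod_add_left_eq)
  qed
  have "fst (\<psi> e (DPmul p l u v)) = Dnorm p l (\<lambda>z. f ((c * z) mod int p) + f' (((c * z) mod int p + y) mod int p))"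
    unfolding psi_def DPmul_def u v c_def[symmetric] Dmulpos_def Dmul_def Dshift_def
    using Dnorm_reindex[of "\<lambda>x. f x + Dnorm p l (\<lambda>x. f' ((x - - y) mod int p)) x" "\<lambda>z. c * z"]
      Dnorm_add_right_reindex[of "\<lambda>z. f ((c * z) mod int p)" "\<lambda>x. f' ((x + y) mod int p)" "\<lambda>z. c * z"]
    by simp
  moreover have "fst (DPmul p l (\<psi> e u) (\<psi> e v))
      = Dnorm p l (\<lambda>z. f ((c * z) mod int p) + f' ((c * ((z + s * y mod int p) mod int p)) mod int p))"
    unfolding psi_def DPmul_def u v c_def[symmetric] s_def[symmetric] Dmulpos_def Dmul_def Dshift_def
    using Dnorm_add_right_reindex[of "\<lambda>z. f ((c * z) mod int p)" "\<lambda>w. f' ((c * w) mod int p)" "\<lambda>z. z + s * y mod int p"]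
    by (simp add: Dnorm_add_left Dnorm_add_right)
  moreover have "snd (\<psi> e (DPmul p l u v)) = snd (DPmul p l (\<psi> e u) (\<psi> e v))"
    unfolding psi_def DPmul_def u v by (simp add: mod_mult_right_eq mod_add_eq distrib_left)
  ultimately show ?thesis using index by (simp add: prod_eq_iff)
qed

lemma psi_psi_mod:
  assumes "0 \<le> a" "a < int r" "0 \<le> a'" "a' < int r"
  shows "\<psi> ((r - 1) * nat a) (\<psi> ((r - 1) * nat a') u) = \<psi> ((r - 1) * nat ((a + a') mod int r)) u"
proof -
  have "nat ((a + a') mod int r) = (nat a + nat a') mod r"
    using assms by (simp add: nat_mod_distrib nat_add_distrib)
  then have "((r - 1) * nat a + (r - 1) * nat a') mod r = ((r - 1) * nat ((a + a') mod int r)) mod r"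
    by (simp add: mod_mult_right_eq add_mult_distrib2)
  then have "\<psi> ((r - 1) * nat a + (r - 1) * nat a') u = \<psi> ((r - 1) * nat ((a + a') mod int r)) u"
    by (rule psi_cong)
  then show ?thesis by (simp add: psi_psi)
qed

section \<open>The group G\<close>

lemma Hmul_in_Hset: "Hmul r h h' \<in> Hset r"
  using r_gt1 unfolding Hmul_def Hset_def by (auto split: prod.splits)

lemma Hmul_assoc: "Hmul r (Hmul r h h') h'' = Hmul r h (Hmul r h' h'')"
proof -
  obtain a b c a' b' c' a'' b'' c'' where "h = (a, b, c)" "h' = (a', b', c')" "h'' = (a'', b'', c'')"
    by (metis prod_cases3)
  moreover have "((a + a') mod int r + a'') mod int r = (a + (a' + a'') mod int r) mod int r"
    and "((b + b') mod int r + b'') mod int r = (b + (b' + b'') mod int r) mod int r"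
    by (simp_all add: mod_add_left_eq mod_add_right_eq add.assoc)
  moreover have "((c + c' - a' * b) mod int r + c'' - a'' * ((b + b') mod int r)) mod int r =
      (c + (c' + c'' - a'' * b') mod int r - ((a' + a'') mod int r) * b) mod int r"
    unfolding mod_add_diff_mult_right_eq mod_add_diff_mult_left_eq by (simp add: algebra_simps)
  ultimately show ?thesis unfolding Hmul_def by simp
qed

abbreviation G :: "gelem monoid" where
  "G \<equiv> Grp p l r g0"

lemma carrier_Grp: "carrier G = (DPset p l \<times> DPset p l) \<times> Hset r"
  unfolding Grp_def Gset_def by simp

lemma mult_Grp:
  "((n1, n2), (a, b, c)) \<otimes>\<^bsub>G\<^esub> ((n1', n2'), h') =
   ((DPmul p l n1 (\<psi> ((r - 1) * nat a) n1'), DPmul p l n2 (\<psi> ((r - 1) * nat b) n2')), Hmul r (a, b, c) h')"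
  unfolding Grp_def Gmul_def by simp

lemma one_Grp: "\<one>\<^bsub>G\<^esub> = Gone"
  unfolding Grp_def by simp

lemma finite_carrier_Grp: "finite (carrier G)"
  unfolding carrier_Grp DPset_def Hset_def using finite_Dset by auto

lemma Grp_mult_closed:
  assumes "x \<in> carrier G" "y \<in> carrier G"
  shows "x \<otimes>\<^bsub>G\<^esub> y \<in> carrier G"
proof -
  obtain n1 n2 a b c where x: "x = ((n1, n2), (a, b, c))" by (metis prod.collapse)
  obtain m1 m2 h' where y: "y = ((m1, m2), h')" by (metis prod.collapse)
  show ?thesis
    using assms unfolding x y carrier_Grp mult_Grp by (simp add: DPmul_in_DPset Hmul_in_Hset)
qed

lemma Grp_mult_assoc:
  assumes "x \<in> carrier G" "y \<in> carrier G"
  shows "x \<otimes>\<^bsub>G\<^esub> y \<otimes>\<^bsub>G\<^esub> z = x \<otimes>\<^bsub>G\<^esub> (y \<otimes>\<^bsub>G\<^esub> z)"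
proof -
  obtain n1 n2 a b c where x: "x = ((n1, n2), (a, b, c))" by (metis prod.collapse)
  obtain m1 m2 a' b' c' where y: "y = ((m1, m2), (a', b', c'))" by (metis prod.collapse)
  obtain k1 k2 h'' where z: "z = ((k1, k2), h'')" by (metis prod.collapse)
  have range: "0 \<le> a" "a < int r" "0 \<le> b" "b < int r" "0 \<le> a'" "a' < int r" "0 \<le> b'" "b' < int r"
    using assms unfolding x y carrier_Grp Hset_def by auto
  have "DPmul p l (DPmul p l n1 (\<psi> ((r - 1) * nat a) m1)) (\<psi> ((r - 1) * nat ((a + a') mod int r)) k1)
     = DPmul p l n1 (\<psi> ((r - 1) * nat a) (DPmul p l m1 (\<psi> ((r - 1) * nat a') k1)))"
    and "DPmul p l (DPmul p l n2 (\<psi> ((r - 1) * nat b) m2)) (\<psi> ((r - 1) * nat ((b + b') mod int r)) k2)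
     = DPmul p l n2 (\<psi> ((r - 1) * nat b) (DPmul p l m2 (\<psi> ((r - 1) * nat b') k2)))"
    by (simp_all only: psi_DPmul DPmul_assoc psi_psi_mod[OF range(1,2,5,6)] psi_psi_mod[OF range(3,4,7,8)])
  then show ?thesis
    unfolding x y z mult_Grp using Hmul_assoc[of "(a, b, c)" "(a', b', c')" h'']
    by (simp add: Hmul_def[of r "(a, b, c)" "(a', b', c')"] mult_Grp)
qed


lemma group_Grp: "group G"
proof (rule groupI)
  show "x \<otimes>\<^bsub>G\<^esub> y \<in> carrier G" if "x \<in> carrier G" "y \<in> carrier G" for x y
    using that by (rule Grp_mult_closed)
  show "x \<otimes>\<^bsub>G\<^esub> y \<otimes>\<^bsub>G\<^esub> z = x \<otimes>\<^bsub>G\<^esub> (y \<otimes>\<^bsub>G\<^esub> z)"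
    if "x \<in> carrier G" "y \<in> carrier G" "z \<in> carrier G" for x y z
    using that by (simp add: Grp_mult_assoc)
  show "\<one>\<^bsub>G\<^esub> \<in> carrier G"
    using r_gt1 by (simp add: one_Grp Gone_def carrier_Grp DPone_in_DPset Hset_def)
  show "\<one>\<^bsub>G\<^esub> \<otimes>\<^bsub>G\<^esub> x = x" if "x \<in> carrier G" for x
    using that unfolding one_Grp Gone_def carrier_Grp
    by (auto simp: mult_Grp psi_0 DPmul_DPone_left Hmul_def Hset_def)
  show "\<exists>y\<in>carrier G. y \<otimes>\<^bsub>G\<^esub> x = \<one>\<^bsub>G\<^esub>" if "x \<in> carrier G" for x
  proof -
    obtain n1 n2 a b c where x: "x = ((n1, n2), (a, b, c))" by (metis prod.collapse)
    define a' where "a' = (- a) mod int r"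
    define b' where "b' = (- b) mod int r"
    define c' where "c' = (- c - a * b) mod int r"
    define y where "y = ((DPinv (\<psi> ((r - 1) * nat a') n1), DPinv (\<psi> ((r - 1) * nat b') n2)), (a', b', c'))"
    have "y \<in> carrier G"
      unfolding y_def carrier_Grp Hset_def a'_def b'_def c'_def using r_gt1 by (auto simp: DPinv_in_DPset)
    moreover have "y \<otimes>\<^bsub>G\<^esub> x = \<one>\<^bsub>G\<^esub>"
    proof -
      have "Hmul r (a', b', c') (a, b, c) = (0, 0, 0)"
        using that unfolding x carrier_Grp Hmul_def a'_def b'_def c'_def
        by (auto simp: mod_add_diff_mult_right_eq mod_add_left_eq)
      then show ?thesis
        unfolding y_def x mult_Grp one_Grp Gone_def by (simp add: DPmul_DPinv_left DPone_def)
    qed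
    ultimately show ?thesis by blast
  qed
qed

end

section \<open>The group algebra kG\<close>

lemma (in group) inv_mult_cancel_left [simp]:
  "x \<in> carrier G \<Longrightarrow> y \<in> carrier G \<Longrightarrow> inv x \<otimes> (x \<otimes> y) = y"
  by (simp add: m_assoc[symmetric])

lemma (in group) mult_inv_cancel_left [simp]:
  "x \<in> carrier G \<Longrightarrow> y \<in> carrier G \<Longrightarrow> x \<otimes> (inv x \<otimes> y) = y"
  by (simp add: m_assoc[symmetric])

locale finite_gelem_group = group G for G :: "gelem monoid" (structure) +
  assumes finite_carrier: "finite (carrier G)"
begin

lemma conv_eq:
  "conv G u v x = (if x \<in> carrier G then \<Sum>g\<in>carrier G. u g * v (inv g \<otimes> x) else 0)"
proof (cases "x \<in> carrier G")
  case True
  have "(\<Sum>h\<in>carrier G. if g \<otimes> h = x then u g * v h else 0) = u g * v (inv g \<otimes> x)"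
    if g: "g \<in> carrier G" for g
  proof -
    have "(\<Sum>h\<in>carrier G. if g \<otimes> h = x then u g * v h else 0)
       = (\<Sum>h\<in>carrier G. if h = inv g \<otimes> x then u g * v h else 0)"
      by (rule sum.cong) (use g True in \<open>auto simp: inv_solve_left\<close>)
    also have "\<dots> = u g * v (inv g \<otimes> x)"
      using g True by (simp add: sum.delta' finite_carrier)
    finally show ?thesis .
  qed
  with True show ?thesis unfolding conv_def by simp
qed (auto simp: conv_def intro!: sum.neutral)

lemma conv_delta_left:
  assumes "g \<in> carrier G"
  shows "conv G (delta g) v x = (if x \<in> carrier G then v (inv g \<otimes> x) else 0)"
proof -
  have "(\<Sum>g'\<in>carrier G. delta g g' * v (inv g' \<otimes> x)) = (\<Sum>g'\<in>carrier G. if g' = g then v (inv g' \<otimes> x) else 0)"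
    by (rule sum.cong) (auto simp: delta_def)
  with assms show ?thesis by (simp add: conv_eq sum.delta' finite_carrier)
qed

lemma conv_delta_right:
  assumes g: "g \<in> carrier G"
  shows "conv G u (delta g) x = (if x \<in> carrier G then u (x \<otimes> inv g) else 0)"
proof (cases "x \<in> carrier G")
  case True
  have "(\<Sum>g'\<in>carrier G. u g' * delta g (inv g' \<otimes> x)) = (\<Sum>g'\<in>carrier G. if g' = x \<otimes> inv g then u g' else 0)"
  proof (rule sum.cong)
    fix g' assume g': "g' \<in> carrier G"
    then have "inv g' \<otimes> x = g \<longleftrightarrow> g' = x \<otimes> inv g"
      using inv_solve_left[of g g' x] inv_solve_right[of g' x g] g True by auto
    then show "u g' * delta g (inv g' \<otimes> x) = (if g' = x \<otimes> inv g then u g' else 0)"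
      unfolding delta_def by auto
  qed simp
  with True g show ?thesis by (simp add: conv_eq sum.delta' finite_carrier)
qed (simp add: conv_eq)

lemma conv_assoc: "conv G (conv G u v) w = conv G u (conv G v w)"
proof
  fix x
  show "conv G (conv G u v) w x = conv G u (conv G v w) x"
  proof (cases "x \<in> carrier G")
    case True
    have "conv G (conv G u v) w x = (\<Sum>a\<in>carrier G. \<Sum>b\<in>carrier G. u b * v (inv b \<otimes> a) * w (inv a \<otimes> x))"
      using True by (auto simp: conv_eq sum_distrib_right intro!: sum.cong)
    also have "\<dots> = (\<Sum>b\<in>carrier G. \<Sum>a\<in>carrier G. u b * v (inv b \<otimes> a) * w (inv a \<otimes> x))"
      by (rule sum.swap)
    also have "\<dots> = (\<Sum>b\<in>carrier G. \<Sum>c\<in>carrier G. u b * v c * w (inv c \<otimes> (inv b \<otimes> x)))"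
    proof (rule sum.cong)
      fix b assume b: "b \<in> carrier G"
      show "(\<Sum>a\<in>carrier G. u b * v (inv b \<otimes> a) * w (inv a \<otimes> x))
          = (\<Sum>c\<in>carrier G. u b * v c * w (inv c \<otimes> (inv b \<otimes> x)))"
        by (rule sum.reindex_bij_witness[where i = "\<lambda>c. b \<otimes> c" and j = "\<lambda>a. inv b \<otimes> a"])
          (use b True in \<open>simp_all add: m_assoc inv_mult_group\<close>)
    qed simp
    also have "\<dots> = conv G u (conv G v w) x"
      using True by (auto simp: conv_eq sum_distrib_left mult.assoc intro!: sum.cong)
    finally show ?thesis .
  qed (simp add: conv_eq)
qed

lemma conv_scale_left: "conv G (\<lambda>x. c * u x) v = (\<lambda>x. c * conv G u v x)"
  by (simp add: fun_eq_iff conv_eq sum_distrib_left mult.assoc)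

lemma conv_scale_right: "conv G u (\<lambda>x. c * v x) = (\<lambda>x. c * conv G u v x)"
  by (simp add: fun_eq_iff conv_eq sum_distrib_left mult.left_commute)

lemma conv_add_left: "conv G (\<lambda>x. u x + u' x) v = (\<lambda>x. conv G u v x + conv G u' v x)"
  by (simp add: fun_eq_iff conv_eq sum.distrib distrib_right)

lemma conv_sum_left: "conv G (\<lambda>x. \<Sum>i\<in>I. f i x) v = (\<lambda>x. \<Sum>i\<in>I. conv G (f i) v x)"
  by (simp add: fun_eq_iff conv_eq sum_distrib_right sum.swap[of _ I])

lemma conv_sum_right: "conv G u (\<lambda>x. \<Sum>i\<in>I. f i x) = (\<lambda>x. \<Sum>i\<in>I. conv G u (f i) x)"
  by (simp add: fun_eq_iff conv_eq sum_distrib_left sum.swap[of _ I])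

lemma conv_delta_delta:
  assumes "a \<in> carrier G" "b \<in> carrier G"
  shows "conv G (delta a) (delta b) = delta (a \<otimes> b)"
proof
  fix x
  have "conv G (delta a) (delta b) x = (if x \<in> carrier G then delta b (inv a \<otimes> x) else 0)"
    using assms(1) by (rule conv_delta_left)
  then show "conv G (delta a) (delta b) x = delta (a \<otimes> b) x"
    using assms inv_solve_left[of b a x] unfolding delta_def by auto
qed

lemma conjg_eq:
  "g \<in> carrier G \<Longrightarrow> conjg G u g x = (if x \<in> carrier G then u (g \<otimes> x \<otimes> inv g) else 0)"
  unfolding conjg_def by (simp add: conv_delta_right conv_delta_left m_assoc)

lemma conjg_one: "conjg G u \<one> x = (if x \<in> carrier G then u x else 0)"
  by (simp add: conjg_eq)

lemma conjg_conjg: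
  "g \<in> carrier G \<Longrightarrow> g' \<in> carrier G \<Longrightarrow> conjg G (conjg G u g) g' = conjg G u (g \<otimes> g')"
  by (auto simp: fun_eq_iff conjg_eq m_assoc inv_mult_group)

lemma conjg_scale: "g \<in> carrier G \<Longrightarrow> conjg G (\<lambda>x. c * u x) g = (\<lambda>x. c * conjg G u g x)"
  by (simp add: fun_eq_iff conjg_eq)

lemma conjg_add: "g \<in> carrier G \<Longrightarrow> conjg G (\<lambda>x. u x + v x) g = (\<lambda>x. conjg G u g x + conjg G v g x)"
  by (simp add: fun_eq_iff conjg_eq)

lemma conjg_lincomb: "g \<in> carrier G \<Longrightarrow>
   conjg G (\<lambda>x. c * (\<Sum>s\<in>S. f s * w s x)) g = (\<lambda>x. c * (\<Sum>s\<in>S. f s * conjg G (w s) g x))"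
  by (simp add: fun_eq_iff conjg_eq sum_distrib_left)

lemma conjg_delta:
  assumes g: "g \<in> carrier G" and h: "h \<in> carrier G"
  shows "conjg G (delta h) g = delta (inv g \<otimes> h \<otimes> g)"
proof
  fix x
  have "x \<in> carrier G \<Longrightarrow> g \<otimes> x \<otimes> inv g = h \<longleftrightarrow> x = inv g \<otimes> h \<otimes> g"
    using g h by (auto simp: m_assoc)
  then show "conjg G (delta h) g x = delta (inv g \<otimes> h \<otimes> g) x"
    using g h by (auto simp: conjg_eq delta_def)
qed

lemma conjg_conv:
  assumes g: "g \<in> carrier G"
  shows "conjg G (conv G u v) g = conv G (conjg G u g) (conjg G v g)"
proof
  fix x
  show "conjg G (conv G u v) g x = conv G (conjg G u g) (conjg G v g) x"
  proof (cases "x \<in> carrier G")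
    case True
    have "conjg G (conv G u v) g x = (\<Sum>a\<in>carrier G. u a * v (inv a \<otimes> (g \<otimes> x \<otimes> inv g)))"
      using g True by (simp add: conjg_eq conv_eq)
    also have "\<dots> = (\<Sum>a\<in>carrier G. u (g \<otimes> a \<otimes> inv g) * v (g \<otimes> (inv a \<otimes> x) \<otimes> inv g))"
      by (rule sum.reindex_bij_witness[where i = "\<lambda>a. g \<otimes> a \<otimes> inv g" and j = "\<lambda>a. inv g \<otimes> a \<otimes> g"])
        (use g True in \<open>simp_all add: m_assoc inv_mult_group\<close>)
    also have "\<dots> = conv G (conjg G u g) (conjg G v g) x"
      using g True by (simp add: conjg_eq conv_eq)
    finally show ?thesis .
  qed (simp add: conv_eq conjg_eq g)
qed

lemma conj_eq_mult_commut:
  "g \<in> carrier G \<Longrightarrow> \<mu> \<in> carrier G \<Longrightarrow> inv g \<otimes> \<mu> \<otimes> g = \<mu> \<otimes> commut G (inv \<mu>) (inv g)"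
  unfolding commut_def by (simp add: m_assoc)

end

context Grp_data
begin

sublocale finite_gelem_group G
  by (intro finite_gelem_group.intro finite_gelem_group_axioms.intro group_Grp finite_carrier_Grp)

section \<open>The subgroups L_1, L_2 and Z\<close>

definition Hemb :: "helem \<Rightarrow> gelem" where
  "Hemb h = ((DPone, DPone), h)"

definition Lelem :: "nat \<Rightarrow> int \<Rightarrow> gelem" where
  "Lelem k t = Hemb (if k = 1 then (t, 0, 0) else (0, t, 0))"

definition Zelem :: "int \<Rightarrow> gelem" where
  "Zelem t = Hemb (0, 0, t)"

definition comm_sign :: "nat \<Rightarrow> int" where
  "comm_sign k = (if k = 1 then -1 else 1)"

lemma Hemb_mult: "Hemb h \<otimes>\<^bsub>G\<^esub> Hemb h' = Hemb (Hmul r h h')"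
proof -
  obtain a b c where "h = (a, b, c)" by (metis prod_cases3)
  then show ?thesis unfolding Hemb_def by (simp add: mult_Grp psi_DPone DPmul_DPone_left DPone_in_DPset)
qed

lemma Hemb_in_carrier: "h \<in> Hset r \<Longrightarrow> Hemb h \<in> carrier G"
  unfolding Hemb_def carrier_Grp by (simp add: DPone_in_DPset)

lemma inv_Hemb:
  assumes "(a, b, c) \<in> Hset r"
  shows "inv\<^bsub>G\<^esub> (Hemb (a, b, c)) = Hemb ((- a) mod int r, (- b) mod int r, (- c - a * b) mod int r)"
proof (rule inv_equality)
  show "Hemb ((- a) mod int r, (- b) mod int r, (- c - a * b) mod int r) \<otimes>\<^bsub>G\<^esub> Hemb (a, b, c) = \<one>\<^bsub>G\<^esub>"
    unfolding Hemb_mult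
    by (simp add: one_Grp Gone_def Hemb_def Hmul_def mod_add_diff_mult_right_eq mod_add_left_eq)
qed (use assms r_gt1 in \<open>auto intro!: Hemb_in_carrier simp: Hset_def\<close>)

lemma Lsub_eq: "Lsub r k = Lelem k ` {0..<int r}"
  unfolding Lsub_def Lelem_def Hemb_def by (auto simp: if_distrib)

lemma Zsub_eq: "Zsub r = Zelem ` {0..<int r}"
  unfolding Zsub_def Zelem_def Hemb_def by auto

lemma Lelem_in_carrier: "t \<in> {0..<int r} \<Longrightarrow> Lelem k t \<in> carrier G"
  unfolding Lelem_def using r_gt1 by (auto intro!: Hemb_in_carrier simp: Hset_def)

lemma Zelem_in_carrier: "t \<in> {0..<int r} \<Longrightarrow> Zelem t \<in> carrier G"
  unfolding Zelem_def using r_gt1 by (auto intro!: Hemb_in_carrier simp: Hset_def)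

lemma Lelem_0: "Lelem k 0 = \<one>\<^bsub>G\<^esub>"
  unfolding Lelem_def Hemb_def one_Grp Gone_def by simp

lemma Lelem_mult:
  "t \<in> {0..<int r} \<Longrightarrow> t' \<in> {0..<int r} \<Longrightarrow> Lelem k t \<otimes>\<^bsub>G\<^esub> Lelem k t' = Lelem k ((t + t') mod int r)"
  unfolding Lelem_def Hemb_mult by (auto simp: Hmul_def)

lemma Zelem_mult:
  "t \<in> {0..<int r} \<Longrightarrow> t' \<in> {0..<int r} \<Longrightarrow> Zelem t \<otimes>\<^bsub>G\<^esub> Zelem t' = Zelem ((t + t') mod int r)"
  unfolding Zelem_def Hemb_mult by (auto simp: Hmul_def)

lemma inv_Lelem: "t \<in> {0..<int r} \<Longrightarrow> inv\<^bsub>G\<^esub> (Lelem k t) = Lelem k ((- t) mod int r)"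
  unfolding Lelem_def using r_gt1 by (auto simp: inv_Hemb Hset_def)

lemma inv_Zelem: "t \<in> {0..<int r} \<Longrightarrow> inv\<^bsub>G\<^esub> (Zelem t) = Zelem ((- t) mod int r)"
  unfolding Zelem_def using r_gt1 by (auto simp: inv_Hemb Hset_def)

lemma Lelem_inj: "Lelem k t = Lelem k t' \<Longrightarrow> t = t'"
  unfolding Lelem_def Hemb_def by (auto split: if_splits)

lemma Zelem_inj: "Zelem t = Zelem t' \<Longrightarrow> t = t'"
  unfolding Zelem_def Hemb_def by auto

lemma card_Lsub: "card (Lsub r k) = r"
  unfolding Lsub_eq by (subst card_image) (auto intro: inj_onI Lelem_inj)

lemma card_Zsub: "card (Zsub r) = r"
  unfolding Zsub_eq by (subst card_image) (auto intro: inj_onI Zelem_inj)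

lemma Lsub_subset_carrier: "Lsub r k \<subseteq> carrier G"
  unfolding Lsub_eq using Lelem_in_carrier by auto

lemma Zsub_subset_carrier: "Zsub r \<subseteq> carrier G"
  unfolding Zsub_eq using Zelem_in_carrier by auto

lemma Lsub_inv_closed: "x \<in> Lsub r k \<Longrightarrow> inv\<^bsub>G\<^esub> x \<in> Lsub r k"
  unfolding Lsub_eq using r_gt1 by (auto simp: inv_Lelem)

lemma Zsub_inv_closed: "x \<in> Zsub r \<Longrightarrow> inv\<^bsub>G\<^esub> x \<in> Zsub r"
  unfolding Zsub_eq using r_gt1 by (auto simp: inv_Zelem)

lemma Zsub_mult_closed: "x \<in> Zsub r \<Longrightarrow> y \<in> Zsub r \<Longrightarrow> x \<otimes>\<^bsub>G\<^esub> y \<in> Zsub r"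
  unfolding Zsub_eq using r_gt1 by (auto simp: Zelem_mult)

lemma commut_Lelem:
  assumes "i \<in> {1, 2}" "s \<in> {0..<int r}" "t \<in> {0..<int r}"
  shows "commut G (Lelem (3 - i) s) (Lelem i t) = Zelem ((comm_sign i * s * t) mod int r)"
  using assms r_gt1 unfolding commut_def Lelem_def Zelem_def comm_sign_def
  by (auto simp: inv_Hemb Hset_def Hemb_mult Hmul_def mod_add_left_eq mod_add_right_eq
      mod_minus_mult_left_eq mod_minus_mult_right_eq mod_mult_right_eq mult.commute)

lemma Zelem_central:
  assumes "t \<in> {0..<int r}" "x \<in> carrier G"
  shows "Zelem t \<otimes>\<^bsub>G\<^esub> x = x \<otimes>\<^bsub>G\<^esub> Zelem t"
proof -
  obtain n1 n2 a b c where x: "x = ((n1, n2), (a, b, c))" by (metis prod.collapse)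
  with assms show ?thesis unfolding Zelem_def Hemb_def
    by (auto simp: carrier_Grp Hset_def mult_Grp psi_0 psi_DPone DPmul_DPone_left DPmul_DPone_right Hmul_def add.commute)
qed

lemma conj_Lelem_embDP:
  assumes "i \<in> {1, 2}" "u \<in> DPset p l" "t \<in> {0..<int r}"
  shows "inv\<^bsub>G\<^esub> (Lelem i t) \<otimes>\<^bsub>G\<^esub> embDP i u \<otimes>\<^bsub>G\<^esub> Lelem i t = embDP i (\<psi> ((r - 1) * nat ((- t) mod int r)) u)"
  using assms r_gt1 unfolding inv_Lelem[OF assms(3)] unfolding Lelem_def Hemb_def embDP_def
  by (auto simp: mult_Grp psi_0 psi_DPone DPmul_DPone_left DPmul_DPone_right psi_in_DPset DPone_in_DPset
      Hmul_def mod_add_left_eq)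

end

section \<open>Characters of Z and L_i\<close>

lemma power_eq_1_imp_eq_power:
  fixes z w :: "'a::idom"
  assumes n: "0 < n" and z: "z ^ n = 1" and primitive: "\<And>m. 0 < m \<Longrightarrow> m < n \<Longrightarrow> z ^ m \<noteq> 1"
    and w: "w ^ n = 1"
  shows "\<exists>m<n. w = z ^ m"
proof -
  define P :: "'a poly" where "P = monom 1 n - 1"
  have roots: "{x. poly P x = 0} = {x::'a. x ^ n = 1}"
    by (simp add: P_def poly_monom)
  have "poly P 0 \<noteq> 0"
    using n by (simp add: P_def poly_monom zero_power)
  then have "P \<noteq> 0" by auto
  have "degree P \<le> n"
    unfolding P_def by (intro degree_diff_le) (simp_all add: degree_monom_le)
  moreover have "card {x::'a. x ^ n = 1} \<le> degree P"
    using card_poly_roots_bound[OF \<open>P \<noteq> 0\<close>] unfolding roots .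
  ultimately have card_roots: "card {x::'a. x ^ n = 1} \<le> n" by linarith
  have "z \<noteq> 0" using z n by (auto simp: zero_power)
  have "inj_on (\<lambda>m. z ^ m) {..<n}"
  proof (rule linorder_inj_onI)
    fix a b assume "a < b" "b \<in> {..<n}"
    then have "z ^ (b - a) \<noteq> 1" using primitive by auto
    moreover have "z ^ b = z ^ a * z ^ (b - a)"
      using \<open>a < b\<close> by (simp add: power_add[symmetric])
    ultimately show "z ^ a \<noteq> z ^ b"
      using \<open>z \<noteq> 0\<close> by auto
  qed auto
  then have "card ((\<lambda>m. z ^ m) ` {..<n}) = n"
    by (simp add: card_image)
  moreover have "(\<lambda>m. z ^ m) ` {..<n} \<subseteq> {x::'a. x ^ n = 1}"
    using z by (auto simp: power_mult[symmetric] mult.commute[of _ n] power_mult)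
  moreover have "finite {x::'a. x ^ n = 1}"
    using poly_roots_finite[OF \<open>P \<noteq> 0\<close>] by (simp add: roots)
  ultimately have "(\<lambda>m. z ^ m) ` {..<n} = {x::'a. x ^ n = 1}"
    using card_roots by (intro card_seteq) auto
  with w show ?thesis by auto
qed

lemma Irr_mult: "\<chi> \<in> Irr G S \<Longrightarrow> x \<in> S \<Longrightarrow> y \<in> S \<Longrightarrow> \<chi> (x \<otimes>\<^bsub>G\<^esub> y) = \<chi> x * \<chi> y"
  unfolding Irr_def by blast

lemma Irr_nonzero: "\<chi> \<in> Irr G S \<Longrightarrow> x \<in> S \<Longrightarrow> \<chi> x \<noteq> 0"
  unfolding Irr_def by blast

locale faithful_central_character = Grp_data p l r g0 for p l r g0 +
  fixes \<theta> :: "gelem \<Rightarrow> 'k::field" and i :: nat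
  assumes theta_mult: "\<forall>x\<in>Zsub r. \<forall>y\<in>Zsub r. \<theta> (x \<otimes>\<^bsub>Grp p l r g0\<^esub> y) = \<theta> x * \<theta> y"
    and theta_nonzero: "\<forall>x\<in>Zsub r. \<theta> x \<noteq> 0"
    and theta_inj: "inj_on \<theta> (Zsub r)"
    and i_12: "i \<in> {1, 2}"
    and r_nonzero: "(of_nat r :: 'k) \<noteq> 0"
begin

definition zeta :: 'k where
  "zeta = \<theta> (Zelem 1)"

definition zeta_int :: "int \<Rightarrow> 'k" where
  "zeta_int x = zeta ^ nat (x mod int r)"

lemma Zelem_in_Zsub: "u \<in> {0..<int r} \<Longrightarrow> Zelem u \<in> Zsub r"
  unfolding Zsub_eq by auto

lemma theta_Zelem_mult:
  "u \<in> {0..<int r} \<Longrightarrow> v \<in> {0..<int r} \<Longrightarrow> \<theta> (Zelem ((u + v) mod int r)) = \<theta> (Zelem u) * \<theta> (Zelem v)"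
  using theta_mult Zelem_in_Zsub Zelem_mult by metis

lemma theta_Zelem_0: "\<theta> (Zelem 0) = 1"
proof -
  have "\<theta> (Zelem 0) = \<theta> (Zelem 0) * \<theta> (Zelem 0)"
    using theta_Zelem_mult[of 0 0] r_gt1 by simp
  moreover have "\<theta> (Zelem 0) \<noteq> 0"
    using theta_nonzero Zelem_in_Zsub[of 0] r_gt1 by auto
  ultimately show ?thesis by simp
qed

lemma theta_Zelem: "u \<in> {0..<int r} \<Longrightarrow> \<theta> (Zelem u) = zeta ^ nat u"
proof (induction "nat u" arbitrary: u)
  case 0
  then show ?case using theta_Zelem_0 by simp
next
  case (Suc n)
  then have u: "u = int n + 1" by simp
  have "\<theta> (Zelem u) = \<theta> (Zelem ((int n + 1) mod int r))"
    using Suc.prems u by simp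
  also have "\<dots> = \<theta> (Zelem (int n)) * \<theta> (Zelem 1)"
    using Suc.prems u by (intro theta_Zelem_mult) auto
  also have "\<dots> = zeta ^ Suc n"
    using Suc.hyps(1)[of "int n"] Suc.prems u unfolding zeta_def by simp
  finally show ?case using Suc.hyps(2) by simp
qed

lemma zeta_pow_r: "zeta ^ r = 1"
proof -
  have "zeta ^ r = \<theta> (Zelem (int r - 1)) * \<theta> (Zelem 1)"
    using theta_Zelem[of "int r - 1"] r_gt1 unfolding zeta_def
    by (simp add: nat_diff_distrib' power_Suc2[symmetric])
  also have "\<dots> = \<theta> (Zelem ((int r - 1 + 1) mod int r))"
    using r_gt1 by (intro theta_Zelem_mult[symmetric]) auto
  finally show ?thesis using theta_Zelem_0 by simp
qed

lemma zeta_pow_mod: "zeta ^ n = zeta ^ (n mod r)"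
proof -
  have "zeta ^ n = (zeta ^ r) ^ (n div r) * zeta ^ (n mod r)"
    by (simp only: power_add[symmetric] power_mult[symmetric] mult_div_mod_eq)
  then show ?thesis using zeta_pow_r by simp
qed

lemma zeta_nonzero: "zeta \<noteq> 0"
  unfolding zeta_def using theta_nonzero Zelem_in_Zsub[of 1] r_gt1 by auto

lemma theta_Zelem_mod: "\<theta> (Zelem (x mod int r)) = zeta_int x"
  unfolding zeta_int_def using r_gt1 by (intro theta_Zelem) auto

lemma zeta_int_cong: "x mod int r = y mod int r \<Longrightarrow> zeta_int x = zeta_int y"
  unfolding zeta_int_def by simp

lemma zeta_int_of_nat: "zeta_int (int n) = zeta ^ n"
  unfolding zeta_int_def using zeta_pow_mod[of n] by (simp add: nat_mod_distrib)

lemma zeta_int_add: "zeta_int (x + y) = zeta_int x * zeta_int y"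
proof -
  have "(nat (x mod int r) + nat (y mod int r)) mod r = nat (x mod int r + y mod int r) mod r"
    using r_gt1 by (simp add: nat_add_distrib)
  also have "\<dots> = nat ((x mod int r + y mod int r) mod int r)"
    using r_gt1 by (simp add: nat_mod_distrib)
  also have "\<dots> = nat ((x + y) mod int r)"
    by (simp add: mod_add_eq)
  finally have "nat ((x + y) mod int r) = (nat (x mod int r) + nat (y mod int r)) mod r" ..
  then have "zeta_int (x + y) = zeta ^ (nat (x mod int r) + nat (y mod int r))"
    unfolding zeta_int_def by (simp add: zeta_pow_mod[symmetric])
  then show ?thesis unfolding zeta_int_def by (simp add: power_add)
qed

lemma zeta_int_mult_of_nat: "zeta_int (x * int n) = zeta_int x ^ n"
  by (induction n) (simp_all add: zeta_int_def algebra_simps zeta_int_add[unfolded zeta_int_def])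

lemma zeta_int_nonzero: "zeta_int x \<noteq> 0"
  unfolding zeta_int_def using zeta_nonzero by simp

lemma zeta_int_eq_1_iff: "zeta_int x = 1 \<longleftrightarrow> int r dvd x"
proof
  assume "zeta_int x = 1"
  then have "\<theta> (Zelem (x mod int r)) = \<theta> (Zelem 0)"
    using theta_Zelem_mod theta_Zelem_0 by simp
  then have "Zelem (x mod int r) = Zelem 0"
    using theta_inj Zelem_in_Zsub[of "x mod int r"] Zelem_in_Zsub[of 0] r_gt1 by (auto dest: inj_onD)
  then show "int r dvd x"
    using Zelem_inj by fastforce
qed (simp add: zeta_int_def)

lemma zeta_int_eq_imp_dvd: "zeta_int x = zeta_int y \<Longrightarrow> int r dvd (x - y)"
  using zeta_int_add[of "x - y" y] zeta_int_nonzero[of y] zeta_int_eq_1_iff[of "x - y"] by simp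

lemma zeta_pow_neq_1: "0 < n \<Longrightarrow> n < r \<Longrightarrow> zeta ^ n \<noteq> 1"
  using zeta_int_eq_1_iff[of "int n"] zeta_int_of_nat[of n] by (auto dest: zdvd_imp_le)

lemma sum_zeta_int: "(\<Sum>t\<in>{0..<int r}. zeta_int (x * t)) = (if int r dvd x then of_nat r else 0)"
proof -
  have "(\<Sum>t\<in>{0..<int r}. zeta_int (x * t)) = (\<Sum>n\<in>{0..<r}. zeta_int (x * int n))"
    by (rule sum.reindex_bij_witness[where i = int and j = nat]) auto
  also have "\<dots> = (\<Sum>n<r. zeta_int x ^ n)"
    by (simp add: zeta_int_mult_of_nat lessThan_atLeast0)
  also have "\<dots> = (if int r dvd x then of_nat r else 0)"
  proof (cases "int r dvd x")
    case False
    have "zeta_int x ^ r = 1"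
      using zeta_int_mult_of_nat[of x r, symmetric] zeta_int_eq_1_iff by simp
    with False show ?thesis using zeta_int_eq_1_iff by (simp add: sum_gp_strict)
  qed (simp add: zeta_int_eq_1_iff[symmetric])
  finally show ?thesis .
qed

lemma Lelem_in_Lsub: "t \<in> {0..<int r} \<Longrightarrow> Lelem k t \<in> Lsub r k"
  unfolding Lsub_eq by auto

lemma Irr_Lelem_0: "\<chi> \<in> Irr G (Lsub r k) \<Longrightarrow> \<chi> (Lelem k 0) = 1"
  using Irr_mult[of \<chi> G "Lsub r k" "Lelem k 0" "Lelem k 0"] Irr_nonzero[of \<chi> G "Lsub r k" "Lelem k 0"]
    Lelem_in_Lsub[of 0 k] Lelem_mult[of 0 0 k] r_gt1
  by simp

lemma Irr_Lelem_pow: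
  assumes \<chi>: "\<chi> \<in> Irr G (Lsub r k)"
  shows "t \<in> {0..<int r} \<Longrightarrow> \<chi> (Lelem k t) = \<chi> (Lelem k 1) ^ nat t"
proof (induction "nat t" arbitrary: t)
  case 0
  then show ?case using Irr_Lelem_0[OF \<chi>] by simp
next
  case (Suc n)
  then have t: "t = int n + 1" by simp
  with Suc.prems have "Lelem k t = Lelem k (int n) \<otimes>\<^bsub>G\<^esub> Lelem k 1"
    using Lelem_mult[of "int n" 1 k] by simp
  with Suc.prems t have "\<chi> (Lelem k t) = \<chi> (Lelem k (int n)) * \<chi> (Lelem k 1)"
    using Irr_mult[OF \<chi>] Lelem_in_Lsub by simp
  also have "\<dots> = \<chi> (Lelem k 1) ^ Suc n"
    using Suc.hyps(1)[of "int n"] Suc.prems t by simp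
  finally show ?case using Suc.hyps(2) by simp
qed

lemma Irr_Lsub_eq_zeta_int:
  assumes \<chi>: "\<chi> \<in> Irr G (Lsub r k)"
  obtains m where "\<And>t. t \<in> {0..<int r} \<Longrightarrow> \<chi> (Lelem k t) = zeta_int (m * t)"
proof -
  let ?w = "\<chi> (Lelem k 1)"
  have "Lelem k (int r - 1) \<otimes>\<^bsub>G\<^esub> Lelem k 1 = Lelem k 0"
    using Lelem_mult[of "int r - 1" 1 k] r_gt1 by simp
  then have "1 = ?w ^ (r - 1) * ?w"
    using Irr_mult[OF \<chi>, of "Lelem k (int r - 1)" "Lelem k 1"] Irr_Lelem_0[OF \<chi>]
      Irr_Lelem_pow[OF \<chi>, of "int r - 1"] Lelem_in_Lsub r_gt1
    by (simp add: nat_diff_distrib')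
  then have "?w ^ r = 1"
    using r_gt1 by (metis Suc_diff_1 power_Suc2 zero_less_one less_trans)
  then obtain m where m: "?w = zeta ^ m"
    using power_eq_1_imp_eq_power[of r zeta ?w] r_gt1 zeta_pow_r zeta_pow_neq_1 by auto
  have "\<chi> (Lelem k t) = zeta_int (int m * t)" if t: "t \<in> {0..<int r}" for t
  proof -
    have "\<chi> (Lelem k t) = zeta ^ (m * nat t)"
      using Irr_Lelem_pow[OF \<chi> t] m by (simp add: power_mult)
    also have "\<dots> = zeta_int (int m * t)"
      using t zeta_int_of_nat[of "m * nat t"] by simp
    finally show ?thesis .
  qed
  then show ?thesis using that by blast
qed

lemma comm_sign_square: "comm_sign k * comm_sign k = 1"
  unfolding comm_sign_def by simp

lemma dvd_comm_sign_mult_iff: "int r dvd comm_sign k * x \<longleftrightarrow> int r dvd x"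
  unfolding comm_sign_def by simp

lemma theta_commut_Lelem:
  "s \<in> {0..<int r} \<Longrightarrow> t \<in> {0..<int r} \<Longrightarrow>
   \<theta> (commut G (Lelem (3 - i) s) (Lelem i t)) = zeta_int (comm_sign i * s * t)"
  using commut_Lelem[OF i_12] theta_Zelem_mod by simp

lemma hchi_eq:
  assumes s0: "s0 \<in> {0..<int r}"
    and \<chi>: "\<And>t. t \<in> {0..<int r} \<Longrightarrow> \<chi> (Lelem i t) = zeta_int (comm_sign i * s0 * t)"
  shows "hchi p l r g0 \<theta> i \<chi> = Lelem (3 - i) s0"
  unfolding hchi_def
proof (rule the_equality)
  show "Lelem (3 - i) s0 \<in> Lsub r (3 - i) \<and> (\<forall>g\<in>Lsub r i. \<chi> g = \<theta> (commut G (Lelem (3 - i) s0) g))"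
    using s0 \<chi> theta_commut_Lelem unfolding Lsub_eq by auto
next
  fix h assume h: "h \<in> Lsub r (3 - i) \<and> (\<forall>g\<in>Lsub r i. \<chi> g = \<theta> (commut G h g))"
  then obtain s where s: "s \<in> {0..<int r}" "h = Lelem (3 - i) s"
    unfolding Lsub_eq by auto
  have "zeta_int (comm_sign i * s0 * 1) = zeta_int (comm_sign i * s * 1)"
    using h \<chi>[of 1] theta_commut_Lelem[of s 1] s Lelem_in_Lsub[of 1 i] r_gt1 by auto
  then have "int r dvd comm_sign i * (s - s0)"
    using zeta_int_eq_imp_dvd by (simp add: right_diff_distrib)
  then have "s mod int r = s0 mod int r"
    by (simp add: dvd_comm_sign_mult_iff mod_eq_dvd_iff)
  with s s0 show "h = Lelem (3 - i) s0" by simp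
qed

definition commut_char :: "int \<Rightarrow> gelem \<Rightarrow> 'k" where
  "commut_char s = (\<lambda>g. if g \<in> Lsub r i then \<theta> (commut G (Lelem (3 - i) s) g) else 0)"

lemma commut_char_Lelem:
  "s \<in> {0..<int r} \<Longrightarrow> t \<in> {0..<int r} \<Longrightarrow> commut_char s (Lelem i t) = zeta_int (comm_sign i * s * t)"
  unfolding commut_char_def using theta_commut_Lelem Lelem_in_Lsub by simp

lemma commut_char_in_Irr:
  assumes s: "s \<in> {0..<int r}"
  shows "commut_char s \<in> Irr G (Lsub r i)"
  unfolding Irr_def mem_Collect_eq
proof (intro conjI ballI allI impI)
  fix x y assume "x \<in> Lsub r i" "y \<in> Lsub r i"
  then obtain t t' where t: "t \<in> {0..<int r}" "x = Lelem i t" and t': "t' \<in> {0..<int r}" "y = Lelem i t'"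
    unfolding Lsub_eq by auto
  have "zeta_int (comm_sign i * s * ((t + t') mod int r)) = zeta_int (comm_sign i * s * t + comm_sign i * s * t')"
    by (rule zeta_int_cong) (simp add: mod_mult_right_eq distrib_left)
  with s t t' r_gt1 show "commut_char s (x \<otimes>\<^bsub>G\<^esub> y) = commut_char s x * commut_char s y"
    by (simp add: Lelem_mult commut_char_Lelem zeta_int_add)
next
  fix x assume "x \<in> Lsub r i"
  with s show "commut_char s x \<noteq> 0"
    unfolding Lsub_eq by (auto simp: commut_char_Lelem zeta_int_nonzero)
qed (simp add: commut_char_def)

lemma Irr_Lsub_hchi:
  assumes \<chi>: "\<chi> \<in> Irr G (Lsub r i)"
  obtains s0 where "s0 \<in> {0..<int r}" "hchi p l r g0 \<theta> i \<chi> = Lelem (3 - i) s0"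
    "\<And>t. t \<in> {0..<int r} \<Longrightarrow> \<chi> (Lelem i t) = zeta_int (comm_sign i * s0 * t)"
proof -
  obtain m where m: "\<And>t. t \<in> {0..<int r} \<Longrightarrow> \<chi> (Lelem i t) = zeta_int (m * t)"
    using Irr_Lsub_eq_zeta_int[OF \<chi>] by blast
  define s0 where "s0 = (comm_sign i * m) mod int r"
  have s0: "s0 \<in> {0..<int r}"
    unfolding s0_def using r_gt1 by simp
  have "\<chi> (Lelem i t) = zeta_int (comm_sign i * s0 * t)" if "t \<in> {0..<int r}" for t
  proof -
    have "zeta_int (comm_sign i * s0 * t) = zeta_int (comm_sign i * (comm_sign i * m) * t)"
      unfolding s0_def by (intro zeta_int_cong mod_mult_cong refl) simp
    also have "\<dots> = zeta_int (m * t)"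
      using comm_sign_square by (simp add: mult.assoc[symmetric])
    finally show ?thesis using m that by simp
  qed
  with s0 show ?thesis using that hchi_eq by blast
qed

section \<open>The idempotents e_\<theta> and e_{1_{L_j}}\<close>

abbreviation e_theta :: "'k galg" where
  "e_theta \<equiv> cpi G (Zsub r) \<theta>"

abbreviation e_one :: "'k galg" where
  "e_one \<equiv> cpi G (Lsub r (3 - i)) (\<lambda>_. 1)"

lemma e_theta_eq: "e_theta = (\<lambda>x. (1 / of_nat r) * (\<Sum>s\<in>Zsub r. \<theta> (inv\<^bsub>G\<^esub> s) * delta s x))"
  unfolding cpi_def card_Zsub ..

lemma e_one_eq: "e_one = (\<lambda>x. (1 / of_nat r) * (\<Sum>\<mu>\<in>Lsub r (3 - i). 1 * delta \<mu> x))"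
  unfolding cpi_def card_Lsub ..

lemma conv_delta_e_theta:
  assumes c: "c \<in> Zsub r"
  shows "conv G (delta c) e_theta = (\<lambda>x. \<theta> c * e_theta x)"
proof
  fix x
  have cG: "c \<in> carrier G" using c Zsub_subset_carrier by auto
  show "conv G (delta c) e_theta x = \<theta> c * e_theta x"
  proof (cases "x \<in> carrier G")
    case True
    have "(\<Sum>s\<in>Zsub r. \<theta> (inv\<^bsub>G\<^esub> s) * delta s (inv\<^bsub>G\<^esub> c \<otimes>\<^bsub>G\<^esub> x))
        = (\<Sum>s\<in>Zsub r. \<theta> (inv\<^bsub>G\<^esub> (inv\<^bsub>G\<^esub> c \<otimes>\<^bsub>G\<^esub> s)) * delta (inv\<^bsub>G\<^esub> c \<otimes>\<^bsub>G\<^esub> s) (inv\<^bsub>G\<^esub> c \<otimes>\<^bsub>G\<^esub> x))"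
      by (rule sum.reindex_bij_witness[where i = "\<lambda>s. inv\<^bsub>G\<^esub> c \<otimes>\<^bsub>G\<^esub> s" and j = "\<lambda>s. c \<otimes>\<^bsub>G\<^esub> s"])
        (use c cG Zsub_subset_carrier in \<open>auto simp: Zsub_mult_closed Zsub_inv_closed\<close>)
    also have "\<dots> = (\<Sum>s\<in>Zsub r. \<theta> c * (\<theta> (inv\<^bsub>G\<^esub> s) * delta s x))"
    proof (rule sum.cong)
      fix s assume s: "s \<in> Zsub r"
      then have sG: "s \<in> carrier G" using Zsub_subset_carrier by auto
      have \<theta>_eq: "\<theta> (inv\<^bsub>G\<^esub> (inv\<^bsub>G\<^esub> c \<otimes>\<^bsub>G\<^esub> s)) = \<theta> (inv\<^bsub>G\<^esub> s) * \<theta> c"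
        using theta_mult s c cG sG by (simp add: inv_mult_group Zsub_inv_closed)
      have delta_eq: "delta (inv\<^bsub>G\<^esub> c \<otimes>\<^bsub>G\<^esub> s) (inv\<^bsub>G\<^esub> c \<otimes>\<^bsub>G\<^esub> x) = delta s x"
        unfolding delta_def using cG sG True by simp
      show "\<theta> (inv\<^bsub>G\<^esub> (inv\<^bsub>G\<^esub> c \<otimes>\<^bsub>G\<^esub> s)) * delta (inv\<^bsub>G\<^esub> c \<otimes>\<^bsub>G\<^esub> s) (inv\<^bsub>G\<^esub> c \<otimes>\<^bsub>G\<^esub> x)
          = \<theta> c * (\<theta> (inv\<^bsub>G\<^esub> s) * delta s x)"
        unfolding \<theta>_eq delta_eq by (simp add: ac_simps)
    qed simp
    finally show ?thesis
      using True cG by (simp add: conv_delta_left e_theta_eq sum_distrib_left[symmetric] mult.left_commute)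
  next
    case False
    then have "delta s x = (0::'k)" if "s \<in> Zsub r" for s :: gelem
      using Zsub_subset_carrier that unfolding delta_def by auto
    with False cG show ?thesis by (simp add: conv_delta_left e_theta_eq)
  qed
qed

lemma conjg_e_theta: "g \<in> carrier G \<Longrightarrow> conjg G e_theta g = e_theta"
proof -
  assume g: "g \<in> carrier G"
  have "conjg G (delta s) g = (delta s :: 'k galg)" if s: "s \<in> Zsub r" for s
  proof -
    obtain u where u: "u \<in> {0..<int r}" "s = Zelem u" using s unfolding Zsub_eq by auto
    then have "inv\<^bsub>G\<^esub> g \<otimes>\<^bsub>G\<^esub> s \<otimes>\<^bsub>G\<^esub> g = s"
      using Zelem_central[OF u(1) g] g Zelem_in_carrier[OF u(1)] by (simp add: m_assoc)
    moreover have "s \<in> carrier G" using s Zsub_subset_carrier by auto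
    ultimately show ?thesis using conjg_delta[OF g, of s] by simp
  qed
  then show ?thesis unfolding e_theta_eq conjg_lincomb[OF g] by simp
qed

lemma commut_inv_Lelem:
  assumes s: "s \<in> {0..<int r}" and t: "t \<in> {0..<int r}"
  shows "commut G (inv\<^bsub>G\<^esub> (Lelem (3 - i) s)) (inv\<^bsub>G\<^esub> (Lelem i t)) = Zelem ((comm_sign i * s * t) mod int r)"
proof -
  have "(comm_sign i * ((- s) mod int r) * ((- t) mod int r)) mod int r = (comm_sign i * (- s) * (- t)) mod int r"
    by (intro mod_mult_cong refl) simp_all
  with s t r_gt1 show ?thesis by (simp add: inv_Lelem commut_Lelem[OF i_12])
qed

lemma commut_inv_Lelem_in_Zsub:
  "g \<in> Lsub r i \<Longrightarrow> \<mu> \<in> Lsub r (3 - i) \<Longrightarrow> commut G (inv\<^bsub>G\<^esub> \<mu>) (inv\<^bsub>G\<^esub> g) \<in> Zsub r"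
  unfolding Lsub_eq using commut_inv_Lelem Zelem_in_Zsub r_gt1 by auto

lemma conjg_e_one:
  assumes g: "g \<in> carrier G"
  shows "conjg G e_one g
    = (\<lambda>x. (1 / of_nat r) * (\<Sum>\<mu>\<in>Lsub r (3 - i). 1 * delta (\<mu> \<otimes>\<^bsub>G\<^esub> commut G (inv\<^bsub>G\<^esub> \<mu>) (inv\<^bsub>G\<^esub> g)) x))"
proof -
  have "conjg G (delta \<mu>) g = (delta (\<mu> \<otimes>\<^bsub>G\<^esub> commut G (inv\<^bsub>G\<^esub> \<mu>) (inv\<^bsub>G\<^esub> g)) :: 'k galg)"
    if "\<mu> \<in> Lsub r (3 - i)" for \<mu>
  proof -
    have \<mu>: "\<mu> \<in> carrier G" using that Lsub_subset_carrier by auto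
    have "conjg G (delta \<mu>) g = (delta (inv\<^bsub>G\<^esub> g \<otimes>\<^bsub>G\<^esub> \<mu> \<otimes>\<^bsub>G\<^esub> g) :: 'k galg)"
      by (rule conjg_delta[OF g \<mu>])
    then show ?thesis using conj_eq_mult_commut[OF g \<mu>] by simp
  qed
  then show ?thesis unfolding e_one_eq conjg_lincomb[OF g] by simp
qed

lemma conv_conv_delta_mult_e_theta:
  assumes \<mu>: "\<mu> \<in> carrier G" and c: "c \<in> Zsub r"
  shows "conv G (conv G a (delta (\<mu> \<otimes>\<^bsub>G\<^esub> c))) e_theta = (\<lambda>x. \<theta> c * conv G a (conv G (delta \<mu>) e_theta) x)"
proof -
  have cG: "c \<in> carrier G" using c Zsub_subset_carrier by auto
  have "conv G (conv G a (delta (\<mu> \<otimes>\<^bsub>G\<^esub> c))) e_theta = conv G a (conv G (delta \<mu>) (conv G (delta c) e_theta))"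
    by (simp add: conv_delta_delta[OF \<mu> cG, symmetric] conv_assoc)
  then show ?thesis
    by (simp add: conv_delta_e_theta[OF c] conv_scale_right)
qed

lemma conjg_conv_e_one_e_theta:
  assumes g: "g \<in> Lsub r i" and a: "conjg G a g = (\<lambda>x. \<chi> g * a x)"
  shows "conjg G (conv G (conv G a e_one) e_theta) g
     = (\<lambda>x. \<chi> g * ((1 / of_nat r) * (\<Sum>\<mu>\<in>Lsub r (3 - i).
              \<theta> (commut G (inv\<^bsub>G\<^esub> \<mu>) (inv\<^bsub>G\<^esub> g)) * conv G a (conv G (delta \<mu>) e_theta) x)))"
proof -
  have gG: "g \<in> carrier G" using g Lsub_subset_carrier by auto
  have "conv G (conv G a (\<lambda>y. 1 * delta (\<mu> \<otimes>\<^bsub>G\<^esub> commut G (inv\<^bsub>G\<^esub> \<mu>) (inv\<^bsub>G\<^esub> g)) y)) e_theta x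
      = \<theta> (commut G (inv\<^bsub>G\<^esub> \<mu>) (inv\<^bsub>G\<^esub> g)) * conv G a (conv G (delta \<mu>) e_theta) x"
    if \<mu>: "\<mu> \<in> Lsub r (3 - i)" for \<mu> x
  proof -
    have "\<mu> \<in> carrier G" using \<mu> Lsub_subset_carrier by auto
    from conv_conv_delta_mult_e_theta[OF this commut_inv_Lelem_in_Zsub[OF g \<mu>]] show ?thesis
      by simp
  qed
  then have "(\<lambda>x. \<chi> g * ((1 / of_nat r) * (\<Sum>\<mu>\<in>Lsub r (3 - i).
        conv G (conv G a (\<lambda>y. 1 * delta (\<mu> \<otimes>\<^bsub>G\<^esub> commut G (inv\<^bsub>G\<^esub> \<mu>) (inv\<^bsub>G\<^esub> g)) y)) e_theta x)))
    = (\<lambda>x. \<chi> g * ((1 / of_nat r) * (\<Sum>\<mu>\<in>Lsub r (3 - i).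
        \<theta> (commut G (inv\<^bsub>G\<^esub> \<mu>) (inv\<^bsub>G\<^esub> g)) * conv G a (conv G (delta \<mu>) e_theta) x)))"
    by (intro ext arg_cong2[where f = "(*)"] refl sum.cong) simp_all
  moreover have "conjg G (conv G (conv G a e_one) e_theta) g
    = (\<lambda>x. \<chi> g * ((1 / of_nat r) * (\<Sum>\<mu>\<in>Lsub r (3 - i).
        conv G (conv G a (\<lambda>y. 1 * delta (\<mu> \<otimes>\<^bsub>G\<^esub> commut G (inv\<^bsub>G\<^esub> \<mu>) (inv\<^bsub>G\<^esub> g)) y)) e_theta x)))"
    by (simp only: conjg_conv[OF gG] a conjg_e_one[OF gG] conjg_e_theta[OF gG]
        conv_scale_left conv_scale_right conv_sum_left conv_sum_right)
  ultimately show ?thesis by simp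
qed

lemma sum_Irr_theta_commut:
  assumes s0: "s0 \<in> {0..<int r}"
    and \<chi>: "\<And>t. t \<in> {0..<int r} \<Longrightarrow> \<chi> (Lelem i t) = zeta_int (comm_sign i * s0 * t)"
    and \<mu>: "\<mu> \<in> Lsub r (3 - i)"
  shows "(\<Sum>g\<in>Lsub r i. \<chi> g * \<theta> (commut G (inv\<^bsub>G\<^esub> \<mu>) (inv\<^bsub>G\<^esub> g)))
    = (if \<mu> = inv\<^bsub>G\<^esub> (Lelem (3 - i) s0) then of_nat r else 0)"
proof -
  obtain s where s: "s \<in> {0..<int r}" "\<mu> = Lelem (3 - i) s"
    using \<mu> unfolding Lsub_eq by auto
  have "(\<Sum>g\<in>Lsub r i. \<chi> g * \<theta> (commut G (inv\<^bsub>G\<^esub> \<mu>) (inv\<^bsub>G\<^esub> g)))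
      = (\<Sum>t\<in>{0..<int r}. \<chi> (Lelem i t) * \<theta> (commut G (inv\<^bsub>G\<^esub> \<mu>) (inv\<^bsub>G\<^esub> (Lelem i t))))"
    unfolding Lsub_eq by (subst sum.reindex) (auto intro: inj_onI Lelem_inj)
  also have "\<dots> = (\<Sum>t\<in>{0..<int r}. zeta_int ((comm_sign i * (s0 + s)) * t))"
    using s \<chi> by (intro sum.cong refl)
      (simp add: commut_inv_Lelem theta_Zelem_mod zeta_int_add[symmetric] algebra_simps)
  also have "\<dots> = (if int r dvd s0 + s then of_nat r else 0)"
    by (simp add: sum_zeta_int dvd_comm_sign_mult_iff)
  also have "int r dvd s0 + s \<longleftrightarrow> s mod int r = (- s0) mod int r"
    by (simp add: mod_eq_dvd_iff add.commute)
  also have "\<dots> \<longleftrightarrow> s = (- s0) mod int r"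
    using s by simp
  also have "\<dots> \<longleftrightarrow> \<mu> = inv\<^bsub>G\<^esub> (Lelem (3 - i) s0)"
    using s s0 inv_Lelem[OF s0, of "3 - i"] Lelem_inj[of "3 - i" s "(- s0) mod int r"] by auto
  finally show ?thesis .
qed

lemma sum_conjg_Achi:
  assumes \<chi>: "\<chi> \<in> Irr G (Lsub r i)" and a: "a \<in> Achi p l r g0 i \<chi>"
  shows "(\<lambda>x. \<Sum>g\<in>Lsub r i. conjg G (conv G (conv G a e_one) e_theta) g x)
       = conv G (conv G a (delta (inv\<^bsub>G\<^esub> (hchi p l r g0 \<theta> i \<chi>)))) e_theta"
proof
  fix x
  obtain s0 where s0: "s0 \<in> {0..<int r}" and h: "hchi p l r g0 \<theta> i \<chi> = Lelem (3 - i) s0"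
    and \<chi>_eq: "\<And>t. t \<in> {0..<int r} \<Longrightarrow> \<chi> (Lelem i t) = zeta_int (comm_sign i * s0 * t)"
    using Irr_Lsub_hchi[OF \<chi>] by blast
  define h' where "h' = inv\<^bsub>G\<^esub> (Lelem (3 - i) s0)"
  have h': "h' \<in> Lsub r (3 - i)"
    unfolding h'_def using s0 by (intro Lsub_inv_closed Lelem_in_Lsub)
  define Y where "Y \<mu> = conv G a (conv G (delta \<mu>) e_theta) x" for \<mu>
  have eigen: "conjg G a g = (\<lambda>x. \<chi> g * a x)" if "g \<in> Lsub r i" for g
    using a that unfolding Achi_def by auto
  have "(\<Sum>g\<in>Lsub r i. conjg G (conv G (conv G a e_one) e_theta) g x)
     = (\<Sum>g\<in>Lsub r i. \<chi> g * ((1 / of_nat r) * (\<Sum>\<mu>\<in>Lsub r (3 - i). \<theta> (commut G (inv\<^bsub>G\<^esub> \<mu>) (inv\<^bsub>G\<^esub> g)) * Y \<mu>)))"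
    unfolding Y_def by (intro sum.cong refl) (simp add: conjg_conv_e_one_e_theta eigen)
  also have "\<dots> = (1 / of_nat r) * (\<Sum>\<mu>\<in>Lsub r (3 - i). (\<Sum>g\<in>Lsub r i. \<chi> g * \<theta> (commut G (inv\<^bsub>G\<^esub> \<mu>) (inv\<^bsub>G\<^esub> g))) * Y \<mu>)"
    by (simp add: sum_distrib_left sum_distrib_right sum.swap[of _ "Lsub r i"] mult_ac)
  also have "\<dots> = (1 / of_nat r) * (\<Sum>\<mu>\<in>Lsub r (3 - i). if \<mu> = h' then of_nat r * Y \<mu> else 0)"
    using sum_Irr_theta_commut[OF s0 \<chi>_eq] unfolding h'_def
    by (intro arg_cong2[where f = "(*)"] refl sum.cong) auto
  also have "\<dots> = Y h'"
    using h' r_nonzero by (simp add: sum.delta' Lsub_eq)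
  finally show "(\<Sum>g\<in>Lsub r i. conjg G (conv G (conv G a e_one) e_theta) g x)
      = conv G (conv G a (delta (inv\<^bsub>G\<^esub> (hchi p l r g0 \<theta> i \<chi>)))) e_theta x"
    unfolding Y_def h'_def h by (simp add: conv_assoc)
qed

end

section \<open>Isotypic decomposition of A_i and the map \<iota>_i\<close>

lemma sum_shift_mod:
  fixes r :: int
  assumes "0 < r" "c \<in> {0..<r}"
  shows "(\<Sum>t\<in>{0..<r}. F t * W ((t + c) mod r)) = (\<Sum>u\<in>{0..<r}. F ((u - c) mod r) * W u)"
  by (rule sum.reindex_bij_witness[where i = "\<lambda>u. (u - c) mod r" and j = "\<lambda>t. (t + c) mod r"])
    (use assms in \<open>auto simp: mod_add_left_eq mod_diff_left_eq\<close>)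

lemma Aalg_iff: "a \<in> Aalg p l k \<longleftrightarrow> (\<forall>x. a x \<noteq> 0 \<longrightarrow> x \<in> embDP k ` DPset p l)"
  unfolding Aalg_def supported_in_def by simp

lemma Aalg_add:
  fixes a b :: "'k::monoid_add galg"
  assumes "a \<in> Aalg p l k" "b \<in> Aalg p l k"
  shows "(\<lambda>x. a x + b x) \<in> Aalg p l k"
proof -
  have "a x + b x \<noteq> 0 \<Longrightarrow> a x \<noteq> 0 \<or> b x \<noteq> 0" for x by auto
  with assms show ?thesis unfolding Aalg_iff by blast
qed

lemma Aalg_scale: "a \<in> Aalg p l k \<Longrightarrow> (\<lambda>x. c * a x :: 'k::mult_zero) \<in> Aalg p l k"
  unfolding Aalg_iff by (metis mult_zero_right)

lemma Aalg_sum: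
  fixes b :: "'a \<Rightarrow> 'k::comm_monoid_add galg"
  shows "finite S \<Longrightarrow> (\<And>s. s \<in> S \<Longrightarrow> b s \<in> Aalg p l k) \<Longrightarrow> (\<lambda>x. \<Sum>s\<in>S. b s x) \<in> Aalg p l k"
proof (induction S rule: finite_induct)
  case empty
  then show ?case unfolding Aalg_iff by simp
next
  case (insert s S)
  then show ?case using Aalg_add[of "b s" p l k "\<lambda>x. \<Sum>s\<in>S. b s x"] by simp
qed

context faithful_central_character
begin

lemma embDP_in_carrier: "u \<in> DPset p l \<Longrightarrow> embDP k u \<in> carrier G"
  unfolding embDP_def carrier_Grp Hset_def using r_gt1 by (simp add: DPone_in_DPset)

lemma Aalg_vanishes_outside: "a \<in> Aalg p l i \<Longrightarrow> x \<notin> carrier G \<Longrightarrow> a x = 0"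
  unfolding Aalg_iff using embDP_in_carrier by blast

lemma conjg_Lelem_in_Aalg:
  assumes a: "a \<in> Aalg p l i" and t: "t \<in> {0..<int r}"
  shows "conjg G a (Lelem i t) \<in> Aalg p l i"
  unfolding Aalg_iff
proof (intro allI impI)
  fix x assume nz: "conjg G a (Lelem i t) x \<noteq> 0"
  let ?g = "Lelem i t"
  have g: "?g \<in> carrier G" using t by (rule Lelem_in_carrier)
  with nz have x: "x \<in> carrier G" and "a (?g \<otimes>\<^bsub>G\<^esub> x \<otimes>\<^bsub>G\<^esub> inv\<^bsub>G\<^esub> ?g) \<noteq> 0"
    by (auto simp: conjg_eq split: if_splits)
  then obtain u where u: "u \<in> DPset p l" "?g \<otimes>\<^bsub>G\<^esub> x \<otimes>\<^bsub>G\<^esub> inv\<^bsub>G\<^esub> ?g = embDP i u"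
    using a unfolding Aalg_iff by blast
  have "x = inv\<^bsub>G\<^esub> ?g \<otimes>\<^bsub>G\<^esub> (?g \<otimes>\<^bsub>G\<^esub> x \<otimes>\<^bsub>G\<^esub> inv\<^bsub>G\<^esub> ?g) \<otimes>\<^bsub>G\<^esub> ?g"
    using g x by (simp add: m_assoc)
  then show "x \<in> embDP i ` DPset p l"
    using u conj_Lelem_embDP[OF i_12 u(1) t] psi_in_DPset by simp
qed

definition isotypic_part :: "int \<Rightarrow> 'k galg \<Rightarrow> 'k galg" where
  "isotypic_part s a =
     (\<lambda>x. (1 / of_nat r) * (\<Sum>t\<in>{0..<int r}. zeta_int (- (comm_sign i * s * t)) * conjg G a (Lelem i t) x))"

lemma isotypic_part_in_Aalg: "a \<in> Aalg p l i \<Longrightarrow> isotypic_part s a \<in> Aalg p l i"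
  unfolding isotypic_part_def
  by (intro Aalg_scale Aalg_sum) (auto intro!: Aalg_scale conjg_Lelem_in_Aalg)

lemma zeta_int_minus_mult_mod:
  "zeta_int (- (k * ((u - t) mod int r))) = zeta_int (- (k * u)) * zeta_int (k * t)"
proof -
  have "(- (k * ((u - t) mod int r))) mod int r = (- (k * (u - t))) mod int r"
    by (intro mod_minus_cong mod_mult_cong refl) simp
  then have "zeta_int (- (k * ((u - t) mod int r))) = zeta_int (- (k * u) + k * t)"
    by (intro zeta_int_cong) (simp add: algebra_simps)
  then show ?thesis by (simp only: zeta_int_add)
qed

lemma isotypic_part_in_Achi:
  assumes a: "a \<in> Aalg p l i" and s: "s \<in> {0..<int r}"
  shows "isotypic_part s a \<in> Achi p l r g0 i (commut_char s)"
  unfolding Achi_def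
proof (intro CollectI conjI ballI ext isotypic_part_in_Aalg[OF a])
  fix g x assume "g \<in> Lsub r i"
  then obtain t' where t': "t' \<in> {0..<int r}" "g = Lelem i t'" unfolding Lsub_eq by auto
  have g: "g \<in> carrier G" using t' Lelem_in_carrier by simp
  let ?k = "comm_sign i * s"
  have "conjg G (isotypic_part s a) g x
      = (1 / of_nat r) * (\<Sum>t\<in>{0..<int r}. zeta_int (- (?k * t)) * conjg G a (Lelem i ((t + t') mod int r)) x)"
    unfolding isotypic_part_def conjg_lincomb[OF g] using t'
    by (intro arg_cong2[where f = "(*)"] refl sum.cong) (auto simp: conjg_conjg Lelem_in_carrier Lelem_mult)
  also have "\<dots> = (1 / of_nat r) * (\<Sum>u\<in>{0..<int r}. zeta_int (- (?k * ((u - t') mod int r))) * conjg G a (Lelem i u) x)"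
    using sum_shift_mod[of "int r" t' "\<lambda>t. zeta_int (- (?k * t))" "\<lambda>v. conjg G a (Lelem i v) x"] r_gt1 t'
    by simp
  also have "\<dots> = zeta_int (?k * t') * isotypic_part s a x"
    unfolding isotypic_part_def zeta_int_minus_mult_mod by (simp add: sum_distrib_left mult_ac)
  also have "\<dots> = commut_char s g * isotypic_part s a x"
    using commut_char_Lelem[OF s t'(1)] t' by simp
  finally show "conjg G (isotypic_part s a) g x = commut_char s g * isotypic_part s a x" .
qed

lemma sum_isotypic_parts:
  assumes a: "a \<in> Aalg p l i"
  shows "(\<lambda>x. \<Sum>s\<in>{0..<int r}. isotypic_part s a x) = a"
proof
  fix x
  have orth: "(\<Sum>s\<in>{0..<int r}. zeta_int (- (comm_sign i * t) * s)) = (if t = 0 then of_nat r else 0)"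
    if t: "t \<in> {0..<int r}" for t
  proof -
    have "int r dvd - (comm_sign i * t) \<longleftrightarrow> t = 0"
      using t zdvd_not_zless[of t "int r"] by (auto simp: dvd_comm_sign_mult_iff le_less)
    with sum_zeta_int[of "- (comm_sign i * t)"] show ?thesis by simp
  qed
  have "(\<Sum>s\<in>{0..<int r}. isotypic_part s a x)
      = (\<Sum>s\<in>{0..<int r}. \<Sum>t\<in>{0..<int r}.
           (1 / of_nat r) * (zeta_int (- (comm_sign i * t) * s) * conjg G a (Lelem i t) x))"
    unfolding isotypic_part_def sum_distrib_left by (intro sum.cong refl) (simp add: ac_simps)
  also have "\<dots> = (\<Sum>t\<in>{0..<int r}. \<Sum>s\<in>{0..<int r}.
           (1 / of_nat r) * (zeta_int (- (comm_sign i * t) * s) * conjg G a (Lelem i t) x))"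
    by (rule sum.swap)
  also have "\<dots> = (1 / of_nat r) * (\<Sum>t\<in>{0..<int r}.
           (\<Sum>s\<in>{0..<int r}. zeta_int (- (comm_sign i * t) * s)) * conjg G a (Lelem i t) x)"
    by (simp only: sum_distrib_left sum_distrib_right)
  also have "\<dots> = (1 / of_nat r) * (\<Sum>t\<in>{0..<int r}. if t = 0 then of_nat r * conjg G a (Lelem i t) x else 0)"
    by (intro arg_cong2[where f = "(*)"] refl sum.cong) (use orth in auto)
  also have "\<dots> = conjg G a (Lelem i 0) x"
    using r_gt1 r_nonzero by simp
  also have "\<dots> = a x"
    using Aalg_vanishes_outside[OF a] by (simp add: Lelem_0 conjg_one)
  finally show "(\<Sum>s\<in>{0..<int r}. isotypic_part s a x) = a x" .
qed

definition iota_spec :: "('k galg \<Rightarrow> 'k galg) \<Rightarrow> bool" where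
  "iota_spec f \<longleftrightarrow>
      (\<forall>a\<in>Aalg p l i. \<forall>b\<in>Aalg p l i. f (\<lambda>x. a x + b x) = (\<lambda>x. f a x + f b x))
    \<and> (\<forall>c. \<forall>a\<in>Aalg p l i. f (\<lambda>x. c * a x) = (\<lambda>x. c * f a x))
    \<and> (\<forall>\<chi>\<in>Irr G (Lsub r i). \<forall>a\<in>Achi p l r g0 i \<chi>.
         f a = conv G (conv G a (delta (inv\<^bsub>G\<^esub> (hchi p l r g0 \<theta> i \<chi>)))) e_theta)
    \<and> (\<forall>a. a \<notin> Aalg p l i \<longrightarrow> f a = (\<lambda>_. 0))"

lemma iota_eq_The: "iota p l r g0 \<theta> i = (THE f. iota_spec f)"
  unfolding iota_def iota_spec_def ..

lemma iota_spec_sum: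
  assumes f: "iota_spec f" and S: "finite S"
  shows "(\<And>s. s \<in> S \<Longrightarrow> b s \<in> Aalg p l i) \<Longrightarrow> f (\<lambda>x. \<Sum>s\<in>S. b s x) = (\<lambda>x. \<Sum>s\<in>S. f (b s) x)"
  using S
proof (induction S rule: finite_induct)
  case empty
  have scale: "\<And>c a. a \<in> Aalg p l i \<Longrightarrow> f (\<lambda>x. c * a x) = (\<lambda>x. c * f a x)"
    using f unfolding iota_spec_def by blast
  have "(\<lambda>_. 0 :: 'k) \<in> Aalg p l i" unfolding Aalg_iff by simp
  from scale[OF this, of 0] show ?case by simp
next
  case (insert s S)
  with f have "f (\<lambda>x. b s x + (\<Sum>s\<in>S. b s x)) = (\<lambda>x. f (b s) x + f (\<lambda>x. \<Sum>s\<in>S. b s x) x)"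
    unfolding iota_spec_def using Aalg_sum[of S b p l i] by simp
  with insert show ?case by simp
qed

lemma iota_spec_eq_sum_isotypic:
  assumes f: "iota_spec f" and a: "a \<in> Aalg p l i"
  shows "f a = (\<lambda>x. \<Sum>s\<in>{0..<int r}.
    conv G (conv G (isotypic_part s a) (delta (inv\<^bsub>G\<^esub> (hchi p l r g0 \<theta> i (commut_char s))))) e_theta x)"
proof -
  have "f a = (\<lambda>x. \<Sum>s\<in>{0..<int r}. f (isotypic_part s a) x)"
    using iota_spec_sum[OF f, of "{0..<int r}" "\<lambda>s. isotypic_part s a"] sum_isotypic_parts[OF a]
      isotypic_part_in_Aalg[OF a] by simp
  moreover have "f (isotypic_part s a)
      = conv G (conv G (isotypic_part s a) (delta (inv\<^bsub>G\<^esub> (hchi p l r g0 \<theta> i (commut_char s))))) e_theta"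
    if "s \<in> {0..<int r}" for s
    using f commut_char_in_Irr[OF that] isotypic_part_in_Achi[OF a that] unfolding iota_spec_def by blast
  ultimately show ?thesis by simp
qed

lemma iota_spec_unique: "iota_spec f \<Longrightarrow> iota_spec f' \<Longrightarrow> f = f'"
proof
  fix a assume f: "iota_spec f" and f': "iota_spec f'"
  show "f a = f' a"
  proof (cases "a \<in> Aalg p l i")
    case True
    then show ?thesis using iota_spec_eq_sum_isotypic[OF f] iota_spec_eq_sum_isotypic[OF f'] by simp
  next
    case False
    then show ?thesis using f f' unfolding iota_spec_def by simp
  qed
qed

definition iota_formula :: "'k galg \<Rightarrow> 'k galg" where
  "iota_formula a = (if a \<in> Aalg p l i
     then (\<lambda>x. \<Sum>g\<in>Lsub r i. conjg G (conv G (conv G a e_one) e_theta) g x) else (\<lambda>_. 0))"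

lemma iota_spec_iota_formula: "iota_spec iota_formula"
  unfolding iota_spec_def
proof (intro conjI ballI allI impI)
  fix a b :: "'k galg" assume a: "a \<in> Aalg p l i" and b: "b \<in> Aalg p l i"
  have "conjg G (conv G (conv G (\<lambda>x. a x + b x) e_one) e_theta) g
      = (\<lambda>x. conjg G (conv G (conv G a e_one) e_theta) g x + conjg G (conv G (conv G b e_one) e_theta) g x)"
    if "g \<in> Lsub r i" for g
  proof -
    have "g \<in> carrier G" using that Lsub_subset_carrier by blast
    then show ?thesis by (simp add: conv_add_left conjg_add)
  qed
  then show "iota_formula (\<lambda>x. a x + b x) = (\<lambda>x. iota_formula a x + iota_formula b x)"
    unfolding iota_formula_def using a b Aalg_add[OF a b] by (simp add: sum.distrib)
next
  fix c and a :: "'k galg" assume a: "a \<in> Aalg p l i"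
  have "conjg G (conv G (conv G (\<lambda>x. c * a x) e_one) e_theta) g
      = (\<lambda>x. c * conjg G (conv G (conv G a e_one) e_theta) g x)"
    if "g \<in> Lsub r i" for g
  proof -
    have "g \<in> carrier G" using that Lsub_subset_carrier by blast
    then show ?thesis by (simp add: conv_scale_left conjg_scale)
  qed
  then show "iota_formula (\<lambda>x. c * a x) = (\<lambda>x. c * iota_formula a x)"
    unfolding iota_formula_def using a Aalg_scale[OF a] by (simp add: sum_distrib_left)
next
  fix \<chi> :: "gelem \<Rightarrow> 'k" and a :: "'k galg"
  assume \<chi>: "\<chi> \<in> Irr G (Lsub r i)" and a: "a \<in> Achi p l r g0 i \<chi>"
  then show "iota_formula a = conv G (conv G a (delta (inv\<^bsub>G\<^esub> (hchi p l r g0 \<theta> i \<chi>)))) e_theta"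
    unfolding iota_formula_def using sum_conjg_Achi[OF \<chi> a] by (simp add: Achi_def)
qed (simp add: iota_formula_def)

lemma iota_eq_iota_formula: "iota p l r g0 \<theta> i = iota_formula"
  unfolding iota_eq_The
  by (rule the_equality) (use iota_spec_iota_formula iota_spec_unique in blast)+

end

theorem proposition5p5:
  fixes p l r g0 :: nat and \<theta> :: "gelem \<Rightarrow> 'k::field"
    and i :: nat and a :: "'k galg"
  assumes l_prime: "prime l"
    and char_k: "CHAR('k) = l"
    and alg_closed: "\<forall>q :: 'k poly. degree q \<ge> 1 \<longrightarrow> (\<exists>x. poly q x = 0)"
    and p_prime: "prime p" and p_ne_l: "p \<noteq> l"
    and g0: "0 < g0" "g0 < p" "ord p g0 = r"
    and r_gt1: "r > 1" and l_ndvd_r: "\<not> l dvd r"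
    and theta_hom: "\<forall>x\<in>Zsub r. \<forall>y\<in>Zsub r. \<theta> (x \<otimes>\<^bsub>Grp p l r g0\<^esub> y) = \<theta> x * \<theta> y"
    and theta_nz: "\<forall>x\<in>Zsub r. \<theta> x \<noteq> 0"
    and theta_faithful: "inj_on \<theta> (Zsub r)"
    and i: "i \<in> {1, 2}"
    and a: "a \<in> Aalg p l i"
  shows "iota p l r g0 \<theta> i a =
    (\<lambda>x. \<Sum>g\<in>Lsub r i.
        conjg (Grp p l r g0)
          (conv (Grp p l r g0)
             (conv (Grp p l r g0) a (cpi (Grp p l r g0) (Lsub r (3 - i)) (\<lambda>_. 1)))
             (cpi (Grp p l r g0) (Zsub r) \<theta>)) g x)"
proof -
  have p_gt1: "p > 1" using p_prime prime_gt_1_nat by blast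
  have l_gt1: "l > 1" using l_prime prime_gt_1_nat by blast
  have "[g0 ^ r = 1] (mod p)" using ord_works[of g0 p] g0(3) by simp
  then have "int g0 ^ r mod int p = 1"
    using p_gt1 unfolding cong_def by (metis of_nat_1 of_nat_mod of_nat_power mod_less)
  moreover have "(of_nat r :: 'k) \<noteq> 0"
    using l_ndvd_r char_k by (simp add: of_nat_eq_0_iff_char_dvd)
  ultimately interpret faithful_central_character p l r g0 \<theta> i
    using p_gt1 l_gt1 r_gt1 theta_hom theta_nz theta_faithful i by unfold_locales auto
  show ?thesis
    using a by (simp add: iota_eq_iota_formula iota_formula_def)
qed

end
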